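(* Let $H_A,K_A,H_B,K_B$ be Hilbert spaces. Regard $H_A\otimes H_B$ as a bipartite quantum system over $(\mathcal B(H_A),\mathcal B(H_B))$ via $a\cdot\xi=(a\otimes I_{H_B})\xi$ and $\xi\cdot b=(I_{H_A}\otimes b^{t})\xi$, and similarly regard $K_A\otimes K_B$ as a bipartite quantum system over $(\mathcal B(K_A),\mathcal B(K_B))$. Then every local isometry $V:H_A\otimes H_B\to K_A\otimes K_B$ (between these two systems) is split, i.e. there exist isometries $V_A:H_A\to K_A$ and $V_B:H_B\to K_B$ with $V=V_A\otimes V_B$.
   Context: For a von Neumann algebra $\mathcal B$, $\mathcal B^o$ denotes its opposite algebra (same vector space and involution, product $b_1^ob_2^o=(b_2b_1)^o$). For a Hilbert space $H_B$, fix an orthonormal basis and let $b^{t}$ denote the transpose of $b\in\mathcal B(H_B)$ with respect to it; $b^o\mapsto b^{t}$ is a normal *-isomorphism $\mathcal B(H_B)^o\to\mathcal B(H_B)$. A bipartite quantum system over a pair of von Neumann algebras $(\mathcal A,\mathcal B)$ is a Hilbert space $H$ with a unital *-representation $\pi_H:\mathcal A\otimes_{\max}\mathcal B^o\to\mathcal B(H)$ that is normal in each variable separately; write $\pi_H(a)=\pi_H(a\otimes 1)$, $\pi_H(b^o)=\pi_H(1\otimes b^o)$, $a\cdot\xi=\pi_H(a)\xi$, $\xi\cdot b=\pi_H(b^o)\xi$. Local operators: if $H$ is a system over $(\mathcal A_1,\mathcal B)$ and $K$ over $(\mathcal A_2,\mathcal B)$, an operator $T\in\mathcal B(H,K)$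 is $\mathcal A_1$-$\mathcal A_2$-local if $T(\xi\cdot b)=(T\xi)\cdot b$ for all $\xi\in H,b\in\mathcal B$ and $T\pi_H(\mathcal A_1)T^*\subseteq\pi_K(\mathcal A_2)$. If $H$ is a system over $(\mathcal A,\mathcal B_1)$ and $K$ over $(\mathcal A,\mathcal B_2)$, $T\in\mathcal B(H,K)$ is $\mathcal B_1$-$\mathcal B_2$-local if $T(a\cdot\xi)=a\cdot(T\xi)$ for all $a\in\mathcal A,\xi\in H$ and $T\pi_H(\mathcal B_1^o)T^*\subseteq\pi_K(\mathcal B_2^o)$. Local isometry: for systems $H$ over $(\mathcal A_1,\mathcal B_1)$ and $K$ over $(\mathcal A_2,\mathcal B_2)$, an operator $T:H\to K$ is a local isometry if there exist bipartite systems $L$ over $(\mathcal A_1,\mathcal B_2)$ and $\tilde L$ over $(\mathcal A_2,\mathcal B_1)$, $\mathcal A_1$-$\mathcal A_2$-local isometries $T_{1,1}:H\to\tilde L$, $T_{2,2}:L\to K$, and $\mathcal B_1$-$\mathcal B_2$-local isometries $T_{1,2}:H\to L$, $T_{2,1}:\tilde L\to K$, such that $T=T_{2,2}T_{1,2}=T_{2,1}T_{1,1}$. In this case one writes $H\le K$. *)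

theory Defs
  imports "HOL-Analysis.Analysis"
begin

text \<open>Hilbert spaces are modelled as l2(I) over an index type I (via a fixed orthonormal
basis).  Vectors are functions I => complex; bounded operators are functions between
vector spaces, normalised to send non-l2 arguments to 0.\<close>

definition l2 :: "('a \<Rightarrow> complex) set" where
  "l2 = {f. (\<lambda>x. (cmod (f x))\<^sup>2) summable_on UNIV}"

definition l2inner :: "('a \<Rightarrow> complex) \<Rightarrow> ('a \<Rightarrow> complex) \<Rightarrow> complex" where
  "l2inner f g = (\<Sum>\<^sub>\<infinity>x. cnj (f x) * g x)"

definition l2norm :: "('a \<Rightarrow> complex) \<Rightarrow> real" where
  "l2norm f = sqrt (\<Sum>\<^sub>\<infinity>x. (cmod (f x))\<^sup>2)"

definition ket :: "'a \<Rightarrow> ('a \<Rightarrow> complex)" where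
  "ket j = (\<lambda>x. if x = j then 1 else 0)"

definition bop :: "(('a \<Rightarrow> complex) \<Rightarrow> ('b \<Rightarrow> complex)) \<Rightarrow> bool" where
  "bop T \<longleftrightarrow> (\<forall>f\<in>l2. T f \<in> l2) \<and> (\<forall>f. f \<notin> l2 \<longrightarrow> T f = (\<lambda>_. 0))
     \<and> (\<forall>f\<in>l2. \<forall>g\<in>l2. \<forall>c. T (\<lambda>x. f x + c * g x) = (\<lambda>y. T f y + c * T g y))
     \<and> (\<exists>C. \<forall>f\<in>l2. l2norm (T f) \<le> C * l2norm f)"

definition idop :: "('a \<Rightarrow> complex) \<Rightarrow> ('a \<Rightarrow> complex)" where
  "idop f = (if f \<in> l2 then f else (\<lambda>_. 0))"

definition opadd :: "(('a \<Rightarrow> complex) \<Rightarrow> ('b \<Rightarrow> complex)) \<Rightarrow> (('a \<Rightarrow> complex) \<Rightarrow> ('b \<Rightarrow> complex))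
     \<Rightarrow> (('a \<Rightarrow> complex) \<Rightarrow> ('b \<Rightarrow> complex))" where
  "opadd S T = (\<lambda>f y. S f y + T f y)"

definition opscale :: "complex \<Rightarrow> (('a \<Rightarrow> complex) \<Rightarrow> ('b \<Rightarrow> complex)) \<Rightarrow> (('a \<Rightarrow> complex) \<Rightarrow> ('b \<Rightarrow> complex))" where
  "opscale c T = (\<lambda>f y. c * T f y)"

definition is_adj :: "(('a \<Rightarrow> complex) \<Rightarrow> ('b \<Rightarrow> complex)) \<Rightarrow> (('b \<Rightarrow> complex) \<Rightarrow> ('a \<Rightarrow> complex)) \<Rightarrow> bool" where
  "is_adj T S \<longleftrightarrow> bop S \<and> (\<forall>f\<in>l2. \<forall>g\<in>l2. l2inner g (T f) = l2inner (S g) f)"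

definition adj :: "(('a \<Rightarrow> complex) \<Rightarrow> ('b \<Rightarrow> complex)) \<Rightarrow> (('b \<Rightarrow> complex) \<Rightarrow> ('a \<Rightarrow> complex))" where
  "adj T = (THE S. is_adj T S)"

definition isometry :: "(('a \<Rightarrow> complex) \<Rightarrow> ('b \<Rightarrow> complex)) \<Rightarrow> bool" where
  "isometry T \<longleftrightarrow> bop T \<and> (\<forall>f\<in>l2. l2norm (T f) = l2norm f)"

definition transp :: "(('a \<Rightarrow> complex) \<Rightarrow> ('a \<Rightarrow> complex)) \<Rightarrow> (('a \<Rightarrow> complex) \<Rightarrow> ('a \<Rightarrow> complex))" where
  "transp b = (THE c. bop c \<and> (\<forall>i j. c (ket j) i = b (ket i) j))"

text \<open>a \<otimes> I and I \<otimes> b on l2('a \<times> 'b) = l2('a) \<otimes> l2('b).\<close>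
definition tensor_left :: "(('a \<Rightarrow> complex) \<Rightarrow> ('c \<Rightarrow> complex)) \<Rightarrow> (('a \<times> 'b \<Rightarrow> complex) \<Rightarrow> ('c \<times> 'b \<Rightarrow> complex))" where
  "tensor_left a \<xi> = (if \<xi> \<in> l2 then (\<lambda>(i, j). a (\<lambda>i'. \<xi> (i', j)) i) else (\<lambda>_. 0))"

definition tensor_right :: "(('b \<Rightarrow> complex) \<Rightarrow> ('d \<Rightarrow> complex)) \<Rightarrow> (('a \<times> 'b \<Rightarrow> complex) \<Rightarrow> ('a \<times> 'd \<Rightarrow> complex))" where
  "tensor_right b \<xi> = (if \<xi> \<in> l2 then (\<lambda>(i, j). b (\<lambda>j'. \<xi> (i, j')) j) else (\<lambda>_. 0))"

definition optensor :: "(('a \<Rightarrow> complex) \<Rightarrow> ('c \<Rightarrow> complex)) \<Rightarrow> (('b \<Rightarrow> complex) \<Rightarrow> ('d \<Rightarrow> complex))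
     \<Rightarrow> (('a \<times> 'b \<Rightarrow> complex) \<Rightarrow> ('c \<times> 'd \<Rightarrow> complex))" where
  "optensor A B = tensor_left A \<circ> tensor_right B"

definition stdA :: "(('a \<Rightarrow> complex) \<Rightarrow> ('a \<Rightarrow> complex)) \<Rightarrow> (('a \<times> 'b \<Rightarrow> complex) \<Rightarrow> ('a \<times> 'b \<Rightarrow> complex))" where
  "stdA a = tensor_left a"

definition stdB :: "(('b \<Rightarrow> complex) \<Rightarrow> ('b \<Rightarrow> complex)) \<Rightarrow> (('a \<times> 'b \<Rightarrow> complex) \<Rightarrow> ('a \<times> 'b \<Rightarrow> complex))" where
  "stdB b = tensor_right (transp b)"

definition pos_op :: "(('a \<Rightarrow> complex) \<Rightarrow> ('a \<Rightarrow> complex)) \<Rightarrow> bool" where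
  "pos_op a \<longleftrightarrow> bop a \<and> (\<forall>f\<in>l2. Im (l2inner f (a f)) = 0 \<and> 0 \<le> Re (l2inner f (a f)))"

definition op_le :: "(('a \<Rightarrow> complex) \<Rightarrow> ('a \<Rightarrow> complex)) \<Rightarrow> (('a \<Rightarrow> complex) \<Rightarrow> ('a \<Rightarrow> complex)) \<Rightarrow> bool" where
  "op_le a b \<longleftrightarrow> bop a \<and> bop b \<and> pos_op (opadd b (opscale (-1) a))"

definition op_lub :: "(('a \<Rightarrow> complex) \<Rightarrow> ('a \<Rightarrow> complex)) set \<Rightarrow> (('a \<Rightarrow> complex) \<Rightarrow> ('a \<Rightarrow> complex)) \<Rightarrow> bool" where
  "op_lub D s \<longleftrightarrow> (\<forall>d\<in>D. op_le d s) \<and> (\<forall>u. (\<forall>d\<in>D. op_le d u) \<longrightarrow> op_le s u)"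

definition op_directed :: "(('a \<Rightarrow> complex) \<Rightarrow> ('a \<Rightarrow> complex)) set \<Rightarrow> bool" where
  "op_directed D \<longleftrightarrow> D \<noteq> {} \<and> (\<forall>x\<in>D. \<forall>y\<in>D. \<exists>z\<in>D. op_le x z \<and> op_le y z)"

text \<open>Normal map: preserves suprema of bounded upward directed families (= increasing nets)
of positive operators.\<close>
definition normal_map :: "((('a \<Rightarrow> complex) \<Rightarrow> ('a \<Rightarrow> complex)) \<Rightarrow> (('l \<Rightarrow> complex) \<Rightarrow> ('l \<Rightarrow> complex))) \<Rightarrow> bool" where
  "normal_map \<phi> \<longleftrightarrow> (\<forall>D s. op_directed D \<and> (\<forall>d\<in>D. pos_op d) \<and> op_lub D s \<longrightarrow> op_lub (\<phi> ` D) (\<phi> s))"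

definition star_rep :: "((('a \<Rightarrow> complex) \<Rightarrow> ('a \<Rightarrow> complex)) \<Rightarrow> (('l \<Rightarrow> complex) \<Rightarrow> ('l \<Rightarrow> complex))) \<Rightarrow> bool" where
  "star_rep \<phi> \<longleftrightarrow> (\<forall>a. bop a \<longrightarrow> bop (\<phi> a))
     \<and> (\<forall>a b c. bop a \<longrightarrow> bop b \<longrightarrow> \<phi> (opadd a (opscale c b)) = opadd (\<phi> a) (opscale c (\<phi> b)))
     \<and> (\<forall>a b. bop a \<longrightarrow> bop b \<longrightarrow> \<phi> (a \<circ> b) = \<phi> a \<circ> \<phi> b)
     \<and> (\<forall>a. bop a \<longrightarrow> \<phi> (adj a) = adj (\<phi> a))
     \<and> \<phi> idop = idop"

text \<open>Unital *-representation of the opposite algebra B(l2('b))^o, written as b |-> pi(b^o):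
an anti-multiplicative map.\<close>
definition star_antirep :: "((('a \<Rightarrow> complex) \<Rightarrow> ('a \<Rightarrow> complex)) \<Rightarrow> (('l \<Rightarrow> complex) \<Rightarrow> ('l \<Rightarrow> complex))) \<Rightarrow> bool" where
  "star_antirep \<phi> \<longleftrightarrow> (\<forall>a. bop a \<longrightarrow> bop (\<phi> a))
     \<and> (\<forall>a b c. bop a \<longrightarrow> bop b \<longrightarrow> \<phi> (opadd a (opscale c b)) = opadd (\<phi> a) (opscale c (\<phi> b)))
     \<and> (\<forall>a b. bop a \<longrightarrow> bop b \<longrightarrow> \<phi> (a \<circ> b) = \<phi> b \<circ> \<phi> a)
     \<and> (\<forall>a. bop a \<longrightarrow> \<phi> (adj a) = adj (\<phi> a))
     \<and> \<phi> idop = idop"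

text \<open>Bipartite system over (B(l2('a)), B(l2('b))) on l2('l): a unital *-representation of
the max tensor product, i.e. a commuting pair (piA, piB) with piB(b) = pi(1 \<otimes> b^o),
normal in each variable.\<close>
definition bip_sys :: "((('a \<Rightarrow> complex) \<Rightarrow> ('a \<Rightarrow> complex)) \<Rightarrow> (('l \<Rightarrow> complex) \<Rightarrow> ('l \<Rightarrow> complex)))
     \<Rightarrow> ((('b \<Rightarrow> complex) \<Rightarrow> ('b \<Rightarrow> complex)) \<Rightarrow> (('l \<Rightarrow> complex) \<Rightarrow> ('l \<Rightarrow> complex))) \<Rightarrow> bool" where
  "bip_sys piA piB \<longleftrightarrow> star_rep piA \<and> star_antirep piB \<and> normal_map piA \<and> normal_map piB
     \<and> (\<forall>a b. bop a \<longrightarrow> bop b \<longrightarrow> piA a \<circ> piB b = piB b \<circ> piA a)"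

definition A_local :: "((('a1 \<Rightarrow> complex) \<Rightarrow> ('a1 \<Rightarrow> complex)) \<Rightarrow> (('h \<Rightarrow> complex) \<Rightarrow> ('h \<Rightarrow> complex)))
     \<Rightarrow> ((('b \<Rightarrow> complex) \<Rightarrow> ('b \<Rightarrow> complex)) \<Rightarrow> (('h \<Rightarrow> complex) \<Rightarrow> ('h \<Rightarrow> complex)))
     \<Rightarrow> ((('a2 \<Rightarrow> complex) \<Rightarrow> ('a2 \<Rightarrow> complex)) \<Rightarrow> (('k \<Rightarrow> complex) \<Rightarrow> ('k \<Rightarrow> complex)))
     \<Rightarrow> ((('b \<Rightarrow> complex) \<Rightarrow> ('b \<Rightarrow> complex)) \<Rightarrow> (('k \<Rightarrow> complex) \<Rightarrow> ('k \<Rightarrow> complex)))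
     \<Rightarrow> (('h \<Rightarrow> complex) \<Rightarrow> ('k \<Rightarrow> complex)) \<Rightarrow> bool" where
  "A_local piA1 piB piA2 piB' T \<longleftrightarrow> bop T
     \<and> (\<forall>b \<xi>. bop b \<longrightarrow> \<xi> \<in> l2 \<longrightarrow> T (piB b \<xi>) = piB' b (T \<xi>))
     \<and> (\<forall>a. bop a \<longrightarrow> (\<exists>a'. bop a' \<and> T \<circ> piA1 a \<circ> adj T = piA2 a'))"

definition B_local :: "((('a \<Rightarrow> complex) \<Rightarrow> ('a \<Rightarrow> complex)) \<Rightarrow> (('h \<Rightarrow> complex) \<Rightarrow> ('h \<Rightarrow> complex)))
     \<Rightarrow> ((('b1 \<Rightarrow> complex) \<Rightarrow> ('b1 \<Rightarrow> complex)) \<Rightarrow> (('h \<Rightarrow> complex) \<Rightarrow> ('h \<Rightarrow> complex)))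
     \<Rightarrow> ((('a \<Rightarrow> complex) \<Rightarrow> ('a \<Rightarrow> complex)) \<Rightarrow> (('k \<Rightarrow> complex) \<Rightarrow> ('k \<Rightarrow> complex)))
     \<Rightarrow> ((('b2 \<Rightarrow> complex) \<Rightarrow> ('b2 \<Rightarrow> complex)) \<Rightarrow> (('k \<Rightarrow> complex) \<Rightarrow> ('k \<Rightarrow> complex)))
     \<Rightarrow> (('h \<Rightarrow> complex) \<Rightarrow> ('k \<Rightarrow> complex)) \<Rightarrow> bool" where
  "B_local piA piB1 piA' piB2 T \<longleftrightarrow> bop T
     \<and> (\<forall>a \<xi>. bop a \<longrightarrow> \<xi> \<in> l2 \<longrightarrow> T (piA a \<xi>) = piA' a (T \<xi>))
     \<and> (\<forall>b. bop b \<longrightarrow> (\<exists>b'. bop b' \<and> T \<circ> piB1 b \<circ> adj T = piB2 b'))"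

end

theory Submission
  imports Defs
begin

text \<open>
  Both factorisations of \<open>V\<close> are used.  The one through the system over \<open>(B(H\<^sub>A), B(K\<^sub>B))\<close> shows
  that \<open>V\<close> intertwines every \<open>a \<otimes> 1\<close> with some \<open>a' \<otimes> 1\<close> and, taking \<open>a = 1\<close> in the locality
  conditions, that the range projection \<open>V V\<^sup>*\<close> is a product \<open>(1 \<otimes> \<beta>)(\<alpha> \<otimes> 1)\<close>; the other one shows
  that \<open>V\<close> intertwines every \<open>1 \<otimes> b\<close> with some \<open>1 \<otimes> b'\<close>.  Conjugating the rank-one projection onto
  \<open>e\<^sub>i\<^sub>0 \<otimes> e\<^sub>j\<^sub>0\<close> by \<open>V\<close> gives the rank-one projection onto \<open>\<omega> = V (e\<^sub>i\<^sub>0 \<otimes> e\<^sub>j\<^sub>0)\<close>, but also a product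
  operator times \<open>V V\<^sup>*\<close>; hence \<open>\<omega>\<close> is a product vector \<open>u \<otimes> v\<close>.  Moving the matrix units
  \<open>|i\<rangle>\<langle>i\<^sub>0| \<otimes> |j\<rangle>\<langle>j\<^sub>0|\<close> through \<open>V\<close> then gives \<open>V (e\<^sub>i \<otimes> e\<^sub>j) = p\<^sub>i \<otimes> q\<^sub>j\<close>, and an isometry of this form
  is a tensor product of isometries.
\<close>

lemma summable_on_finite_support:
  fixes f :: "'a \<Rightarrow> 'b::{comm_monoid_add, topological_space}"
  assumes "finite F" "\<And>x. x \<notin> F \<Longrightarrow> f x = 0"
  shows "f summable_on A"
proof -
  have "f summable_on (A \<inter> F)" using assms by simp
  then show ?thesis
    by (rule summable_on_cong_neutral[THEN iffD1, rotated -1]) (use assms in auto)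
qed

lemma infsum_finite_support:
  fixes f :: "'a \<Rightarrow> 'b::{comm_monoid_add, t2_space}"
  assumes "finite F" "\<And>x. x \<notin> F \<Longrightarrow> f x = 0"
  shows "infsum f UNIV = sum f F"
proof -
  have "infsum f UNIV = infsum f F"
    by (rule infsum_cong_neutral) (use assms in auto)
  then show ?thesis using assms by simp
qed

lemma l2_zero [simp]: "(\<lambda>_. 0) \<in> l2"
  by (simp add: l2_def)

lemma l2_lin:
  assumes "f \<in> l2" "g \<in> l2"
  shows "(\<lambda>x. f x + c * g x) \<in> l2"
proof -
  have dominating: "(\<lambda>x. 2 * (cmod (f x))\<^sup>2 + 2 * (cmod c * cmod (g x))\<^sup>2) summable_on UNIV"
    using assms by (intro summable_on_add summable_on_cmult_right)
      (auto simp: l2_def power_mult_distrib intro!: summable_on_cmult_right)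
  have "(cmod (f x + c * g x))\<^sup>2 \<le> 2 * (cmod (f x))\<^sup>2 + 2 * (cmod c * cmod (g x))\<^sup>2" for x
  proof -
    have "cmod (f x + c * g x) \<le> cmod (f x) + cmod c * cmod (g x)"
      by (metis norm_mult norm_triangle_ineq)
    then have "(cmod (f x + c * g x))\<^sup>2 \<le> (cmod (f x) + cmod c * cmod (g x))\<^sup>2"
      by (simp add: power_mono)
    also have "\<dots> \<le> 2 * (cmod (f x))\<^sup>2 + 2 * (cmod c * cmod (g x))\<^sup>2"
      using sum_squares_bound[of "cmod (f x)" "cmod c * cmod (g x)"] by (simp add: power2_sum)
    finally show ?thesis .
  qed
  then show ?thesis
    unfolding l2_def by (auto intro!: summable_on_comparison_test[OF dominating])
qed

lemma l2_scale: "g \<in> l2 \<Longrightarrow> (\<lambda>x. c * g x) \<in> l2"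
  using l2_lin[of "\<lambda>_. 0" g c] by simp

lemma l2_diff: "f \<in> l2 \<Longrightarrow> g \<in> l2 \<Longrightarrow> (\<lambda>x. f x - g x) \<in> l2"
  using l2_lin[of f g "-1"] by simp

lemma l2_finite_support: "finite F \<Longrightarrow> (\<And>x. x \<notin> F \<Longrightarrow> f x = 0) \<Longrightarrow> f \<in> l2"
  unfolding l2_def by (auto intro!: summable_on_finite_support)

lemma l2_ket [simp]: "ket j \<in> l2"
  by (rule l2_finite_support[of "{j}"]) (auto simp: ket_def)

definition cnj_vec :: "('a \<Rightarrow> complex) \<Rightarrow> ('a \<Rightarrow> complex)" where
  "cnj_vec f = (\<lambda>x. cnj (f x))"

lemma l2_cnj_vec [simp]: "cnj_vec f \<in> l2 \<longleftrightarrow> f \<in> l2"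
  by (simp add: cnj_vec_def l2_def)

definition sqnorm :: "('a \<Rightarrow> complex) \<Rightarrow> real" where
  "sqnorm f = (\<Sum>\<^sub>\<infinity>x. (cmod (f x))\<^sup>2)"

lemma sqnorm_nonneg: "0 \<le> sqnorm f"
  unfolding sqnorm_def by (simp add: infsum_nonneg)

lemma l2norm_sqnorm: "l2norm f = sqrt (sqnorm f)"
  by (simp add: l2norm_def sqnorm_def)

lemma l2norm_nonneg: "0 \<le> l2norm f"
  by (simp add: l2norm_sqnorm sqnorm_nonneg)

lemma l2norm_power2: "(l2norm f)\<^sup>2 = sqnorm f"
  by (simp add: l2norm_sqnorm sqnorm_nonneg)

lemma sqnorm_scale: "sqnorm (\<lambda>x. c * f x) = (cmod c)\<^sup>2 * sqnorm f"
  unfolding sqnorm_def by (simp add: norm_mult power_mult_distrib infsum_cmult_right')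

lemma l2norm_scale: "l2norm (\<lambda>x. c * f x) = cmod c * l2norm f"
  by (simp add: l2norm_sqnorm sqnorm_scale real_sqrt_mult)

lemma sqnorm_cnj_vec [simp]: "sqnorm (cnj_vec f) = sqnorm f"
  by (simp add: sqnorm_def cnj_vec_def)

lemma sqnorm_ket: "sqnorm (ket j) = 1"
proof -
  have "sqnorm (ket j) = (\<Sum>x\<in>{j}. (cmod (ket j x))\<^sup>2)"
    unfolding sqnorm_def by (rule infsum_finite_support) (auto simp: ket_def)
  then show ?thesis by (simp add: ket_def)
qed

lemma l2norm_ket [simp]: "l2norm (ket j) = 1"
  by (simp add: l2norm_sqnorm sqnorm_ket)

lemma sqnorm_ge_component: "f \<in> l2 \<Longrightarrow> (cmod (f l))\<^sup>2 \<le> sqnorm f"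
  unfolding sqnorm_def l2_def
  using finite_sum_le_infsum[of "\<lambda>x. (cmod (f x))\<^sup>2" UNIV "{l}"] by simp

lemma L2_set_le_l2norm: "f \<in> l2 \<Longrightarrow> L2_set (\<lambda>x. cmod (f x)) F \<le> l2norm f"
  unfolding L2_set_def l2norm_def l2_def
  by (cases "finite F") (auto intro!: real_sqrt_le_mono finite_sum_le_infsum infsum_nonneg)

lemma l2inner_abs_summable:
  assumes "f \<in> l2" "g \<in> l2"
  shows "(\<lambda>x. cmod (f x) * cmod (g x)) summable_on UNIV"
proof -
  have "(\<lambda>x. (1/2) * ((cmod (f x))\<^sup>2 + (cmod (g x))\<^sup>2)) summable_on UNIV"
    using assms unfolding l2_def by (intro summable_on_cmult_right summable_on_add) auto
  moreover have "cmod (f x) * cmod (g x) \<le> (1/2) * ((cmod (f x))\<^sup>2 + (cmod (g x))\<^sup>2)" for x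
    using sum_squares_bound[of "cmod (f x)" "cmod (g x)"] by simp
  ultimately show ?thesis
    by (rule summable_on_comparison_test) simp
qed

lemma l2inner_summable:
  assumes "f \<in> l2" "g \<in> l2"
  shows "(\<lambda>x. cnj (f x) * g x) summable_on UNIV"
  using l2inner_abs_summable[OF assms]
  by (simp add: summable_on_iff_abs_summable_on_complex norm_mult)

lemma l2inner_lin_right:
  assumes "f \<in> l2" "g \<in> l2" "h \<in> l2"
  shows "l2inner f (\<lambda>x. g x + c * h x) = l2inner f g + c * l2inner f h"
proof -
  have "l2inner f (\<lambda>x. g x + c * h x) = (\<Sum>\<^sub>\<infinity>x. cnj (f x) * g x + c * (cnj (f x) * h x))"
    unfolding l2inner_def by (simp add: algebra_simps)
  also have "\<dots> = l2inner f g + c * l2inner f h"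
    unfolding l2inner_def using l2inner_summable[OF assms(1,2)] l2inner_summable[OF assms(1,3)]
    by (subst infsum_add) (auto intro: summable_on_cmult_right simp: infsum_cmult_right')
  finally show ?thesis .
qed

lemma l2inner_commute_cnj: "l2inner g f = cnj (l2inner f g)"
  unfolding l2inner_def by (simp flip: infsum_cnj add: mult.commute)

lemma l2inner_lin_left:
  assumes "f \<in> l2" "g \<in> l2" "h \<in> l2"
  shows "l2inner (\<lambda>x. g x + c * h x) f = l2inner g f + cnj c * l2inner h f"
  using l2inner_lin_right[OF assms, of c] by (subst (1 2 3) l2inner_commute_cnj) simp

lemma l2inner_scale_left: "l2inner (\<lambda>x. c * f x) g = cnj c * l2inner f g"
  unfolding l2inner_def by (simp add: mult.assoc infsum_cmult_right')

lemma l2inner_ket_left: "l2inner (ket j) g = g j"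
proof -
  have "l2inner (ket j) g = (\<Sum>x\<in>{j}. cnj (ket j x) * g x)"
    unfolding l2inner_def by (rule infsum_finite_support) (auto simp: ket_def)
  then show ?thesis by (simp add: ket_def)
qed

lemma l2inner_ket_right: "l2inner g (ket j) = cnj (g j)"
  by (subst l2inner_commute_cnj) (simp add: l2inner_ket_left)

lemma l2inner_self:
  assumes "f \<in> l2"
  shows "l2inner f f = complex_of_real ((l2norm f)\<^sup>2)"
proof -
  have "l2inner f f = (\<Sum>\<^sub>\<infinity>x. complex_of_real ((cmod (f x))\<^sup>2))"
    unfolding l2inner_def by (rule infsum_cong) (metis complex_norm_square mult.commute of_real_power)
  also have "\<dots> = complex_of_real ((l2norm f)\<^sup>2)"
    unfolding l2norm_power2 sqnorm_def using assms unfolding l2_def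
    by (intro infsumI has_sum_of_real has_sum_infsum) auto
  finally show ?thesis .
qed

lemma l2inner_cauchy_schwarz:
  assumes f: "f \<in> l2" and g: "g \<in> l2"
  shows "cmod (l2inner f g) \<le> l2norm f * l2norm g"
proof -
  have "cmod (l2inner f g) \<le> (\<Sum>\<^sub>\<infinity>x. cmod (f x) * cmod (g x))"
    unfolding l2inner_def
    using norm_infsum_bound[of "\<lambda>x. cnj (f x) * g x" UNIV] l2inner_abs_summable[OF f g]
    by (simp add: norm_mult)
  also have "\<dots> \<le> l2norm f * l2norm g"
  proof (rule infsum_le_finite_sums[OF l2inner_abs_summable[OF f g]])
    fix F :: "'a set"
    have "(\<Sum>x\<in>F. cmod (f x) * cmod (g x))
        \<le> L2_set (\<lambda>x. cmod (f x)) F * L2_set (\<lambda>x. cmod (g x)) F"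
      using L2_set_mult_ineq[of "\<lambda>x. cmod (f x)" "\<lambda>x. cmod (g x)" F] by simp
    also have "\<dots> \<le> l2norm f * l2norm g"
      using f g by (intro mult_mono L2_set_le_l2norm) (auto simp: l2norm_nonneg)
    finally show "(\<Sum>x\<in>F. cmod (f x) * cmod (g x)) \<le> l2norm f * l2norm g" .
  qed
  finally show ?thesis .
qed

lemma bop_l2: "bop T \<Longrightarrow> f \<in> l2 \<Longrightarrow> T f \<in> l2"
  by (simp add: bop_def)

lemma bop_nonl2: "bop T \<Longrightarrow> f \<notin> l2 \<Longrightarrow> T f = (\<lambda>_. 0)"
  by (simp add: bop_def)

lemma bop_range_l2: "bop T \<Longrightarrow> T f \<in> l2"
  by (cases "f \<in> l2") (auto simp: bop_def)

lemma bop_lin: "bop T \<Longrightarrow> f \<in> l2 \<Longrightarrow> g \<in> l2 \<Longrightarrow> T (\<lambda>x. f x + c * g x) = (\<lambda>y. T f y + c * T g y)"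
  by (simp add: bop_def)

lemma bop_zero: "bop T \<Longrightarrow> T (\<lambda>_. 0) = (\<lambda>_. 0)"
  using bop_lin[of T "\<lambda>_. 0" "\<lambda>_. 0" 1] by (auto simp: fun_eq_iff)

lemma bop_scale: "bop T \<Longrightarrow> g \<in> l2 \<Longrightarrow> T (\<lambda>x. c * g x) = (\<lambda>y. c * T g y)"
  using bop_lin[of T "\<lambda>_. 0" g c] by (simp add: bop_zero)

lemma bop_diff: "bop T \<Longrightarrow> f \<in> l2 \<Longrightarrow> g \<in> l2 \<Longrightarrow> T (\<lambda>x. f x - g x) = (\<lambda>y. T f y - T g y)"
  using bop_lin[of T f g "-1"] by simp

lemma bop_bound:
  fixes T :: "('a \<Rightarrow> complex) \<Rightarrow> ('b \<Rightarrow> complex)"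
  assumes "bop T"
  obtains C where "C \<ge> 0" "\<And>f. f \<in> l2 \<Longrightarrow> l2norm (T f) \<le> C * l2norm f"
proof -
  obtain C where C: "\<forall>f\<in>l2. l2norm (T f) \<le> C * l2norm f"
    using assms by (auto simp: bop_def)
  have "l2norm (T f) \<le> max C 0 * l2norm f" if "f \<in> l2" for f
    using C that mult_right_mono[OF max.cobounded1 l2norm_nonneg] by (meson order.trans)
  then show ?thesis by (intro that[of "max C 0"]) auto
qed

lemma bopI:
  assumes "\<And>f. f \<in> l2 \<Longrightarrow> T f \<in> l2" "\<And>f. f \<notin> l2 \<Longrightarrow> T f = (\<lambda>_. 0)"
    "\<And>f g c. f \<in> l2 \<Longrightarrow> g \<in> l2 \<Longrightarrow> T (\<lambda>x. f x + c * g x) = (\<lambda>y. T f y + c * T g y)"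
    "\<And>f. f \<in> l2 \<Longrightarrow> l2norm (T f) \<le> C * l2norm f"
  shows "bop T"
  using assms unfolding bop_def by blast

lemma bop_comp:
  fixes S :: "('a \<Rightarrow> complex) \<Rightarrow> ('b \<Rightarrow> complex)" and T :: "('b \<Rightarrow> complex) \<Rightarrow> ('c \<Rightarrow> complex)"
  assumes S: "bop S" and T: "bop T"
  shows "bop (T \<circ> S)"
proof -
  obtain C1 where C1: "C1 \<ge> 0" "\<And>f. f \<in> l2 \<Longrightarrow> l2norm (S f) \<le> C1 * l2norm f"
    using bop_bound[OF S] by blast
  obtain C2 where C2: "C2 \<ge> 0" "\<And>f. f \<in> l2 \<Longrightarrow> l2norm (T f) \<le> C2 * l2norm f"
    using bop_bound[OF T] by blast
  show ?thesis
  proof (rule bopI[where C = "C2 * C1"])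
    fix f :: "'a \<Rightarrow> complex" assume f: "f \<in> l2"
    then show "(T \<circ> S) f \<in> l2" using S T by (simp add: bop_l2)
    have "l2norm (T (S f)) \<le> C2 * l2norm (S f)" using C2 bop_l2[OF S f] by auto
    also have "\<dots> \<le> C2 * (C1 * l2norm f)" using C1 f C2(1) by (simp add: mult_left_mono)
    finally show "l2norm ((T \<circ> S) f) \<le> C2 * C1 * l2norm f" by simp
  qed (use S T in \<open>simp_all add: bop_nonl2 bop_zero bop_lin bop_l2\<close>)
qed

lemma idop_bop: "bop idop"
  by (rule bopI[where C = 1]) (simp_all add: idop_def l2_lin)

lemma idop_l2 [simp]: "f \<in> l2 \<Longrightarrow> idop f = f"
  by (simp add: idop_def)

definition restrict_vec :: "'a set \<Rightarrow> ('a \<Rightarrow> complex) \<Rightarrow> ('a \<Rightarrow> complex)" where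
  "restrict_vec F f = (\<lambda>y. if y \<in> F then f y else 0)"

lemma l2_restrict_vec: "finite F \<Longrightarrow> restrict_vec F f \<in> l2"
  by (rule l2_finite_support[of F]) (auto simp: restrict_vec_def)

lemma restrict_vec_insert:
  "a \<notin> F \<Longrightarrow> restrict_vec (insert a F) f = (\<lambda>y. restrict_vec F f y + f a * ket a y)"
  by (auto simp: restrict_vec_def ket_def fun_eq_iff)

lemma bop_restrict_vec:
  assumes "bop T" "finite F"
  shows "T (restrict_vec F f) = (\<lambda>z. \<Sum>x\<in>F. f x * T (ket x) z)"
  using assms(2)
proof (induction F rule: finite_induct)
  case empty
  then show ?case using assms(1) by (simp add: restrict_vec_def bop_zero)
next
  case (insert a F)
  then show ?case
    using assms(1) by (simp add: restrict_vec_insert bop_lin l2_restrict_vec add.commute)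
qed

lemma l2_sum:
  assumes "finite F" "\<And>x. v x \<in> l2"
  shows "(\<lambda>z. \<Sum>x\<in>F. c x * v x z) \<in> l2"
  using assms(1)
proof (induction F rule: finite_induct)
  case (insert a F)
  then show ?case using l2_lin[OF insert(3) assms(2)[of a], of "c a"] by (simp add: add.commute)
qed simp

lemma l2inner_sum_right:
  assumes "g \<in> l2" "finite F" "\<And>x. v x \<in> l2"
  shows "l2inner g (\<lambda>z. \<Sum>x\<in>F. c x * v x z) = (\<Sum>x\<in>F. c x * l2inner g (v x))"
  using assms(2)
proof (induction F rule: finite_induct)
  case empty
  then show ?case by (simp add: l2inner_def)
next
  case (insert a F)
  have "l2inner g (\<lambda>z. \<Sum>x\<in>insert a F. c x * v x z)
      = l2inner g (\<lambda>z. (\<Sum>x\<in>F. c x * v x z) + c a * v a z)"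
    using insert by (simp add: add.commute)
  also have "\<dots> = (\<Sum>x\<in>F. c x * l2inner g (v x)) + c a * l2inner g (v a)"
    using insert assms by (simp add: l2inner_lin_right l2_sum)
  finally show ?case using insert by (simp add: add.commute)
qed

lemma sqnorm_minus_restrict_vec:
  assumes f: "f \<in> l2" and F: "finite F"
  shows "sqnorm (\<lambda>y. f y - restrict_vec F f y) = sqnorm f - (\<Sum>x\<in>F. (cmod (f x))\<^sup>2)"
proof -
  have sm: "(\<lambda>x. (cmod (f x))\<^sup>2) summable_on UNIV" using f by (simp add: l2_def)
  have "sqnorm (\<lambda>y. f y - restrict_vec F f y) = (\<Sum>\<^sub>\<infinity>y\<in>UNIV - F. (cmod (f y))\<^sup>2)"
    unfolding sqnorm_def restrict_vec_def by (rule infsum_cong_neutral) auto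
  also have "\<dots> = sqnorm f - (\<Sum>x\<in>F. (cmod (f x))\<^sup>2)"
    unfolding sqnorm_def using sm F by (subst infsum_Diff) auto
  finally show ?thesis .
qed

lemma l2norm_minus_restrict_vec_tendsto:
  assumes "f \<in> l2"
  shows "((\<lambda>F. l2norm (\<lambda>y. f y - restrict_vec F f y)) \<longlongrightarrow> 0) (finite_subsets_at_top UNIV)"
proof -
  have partial_sums: "((\<lambda>F. \<Sum>x\<in>F. (cmod (f x))\<^sup>2) \<longlongrightarrow> sqnorm f) (finite_subsets_at_top UNIV)"
    using assms unfolding sqnorm_def l2_def by (simp add: summable_iff_has_sum_infsum has_sum_def)
  have "((\<lambda>F. sqrt (sqnorm f - (\<Sum>x\<in>F. (cmod (f x))\<^sup>2))) \<longlongrightarrow> 0)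
      (finite_subsets_at_top UNIV)"
    using tendsto_real_sqrt[OF tendsto_diff[OF tendsto_const partial_sums, of "sqnorm f"]] by simp
  then show ?thesis
    by (rule Lim_transform_eventually)
      (use assms in \<open>auto intro!: eventually_finite_subsets_at_top_weakI
        simp: l2norm_sqnorm sqnorm_minus_restrict_vec\<close>)
qed

section \<open>The adjoint\<close>

definition adj_explicit :: "(('a \<Rightarrow> complex) \<Rightarrow> ('b \<Rightarrow> complex)) \<Rightarrow> (('b \<Rightarrow> complex) \<Rightarrow> ('a \<Rightarrow> complex))" where
  "adj_explicit T g = (if g \<in> l2 then (\<lambda>x. cnj (l2inner g (T (ket x)))) else (\<lambda>_. 0))"

lemma l2norm_restrict_adj_explicit:
  fixes T :: "('a \<Rightarrow> complex) \<Rightarrow> ('b \<Rightarrow> complex)"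
  assumes T: "bop T" and C: "C \<ge> 0" "\<And>f. f \<in> l2 \<Longrightarrow> l2norm (T f) \<le> C * l2norm f"
    and g: "g \<in> l2" and F: "finite F"
  shows "l2norm (restrict_vec F (adj_explicit T g)) \<le> C * l2norm g"
proof -
  define h where "h = restrict_vec F (adj_explicit T g)"
  have h: "h \<in> l2" unfolding h_def using F by (rule l2_restrict_vec)
  \<comment> \<open>testing \<open>T h\<close> against \<open>g\<close> returns \<open>\<parallel>h\<parallel>\<^sup>2\<close>\<close>
  have "l2inner g (T h) = (\<Sum>x\<in>F. adj_explicit T g x * l2inner g (T (ket x)))"
    unfolding h_def bop_restrict_vec[OF T F] using g F by (rule l2inner_sum_right) (simp add: T bop_l2)
  also have "\<dots> = (\<Sum>x\<in>F. complex_of_real ((cmod (adj_explicit T g x))\<^sup>2))"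
    using g by (intro sum.cong)
      (auto simp: adj_explicit_def complex_norm_square mult.commute simp flip: of_real_power)
  also have "\<dots> = complex_of_real (sqnorm h)"
    unfolding h_def sqnorm_def restrict_vec_def
    by (subst infsum_finite_support[OF F]) (use F in auto)
  finally have "(l2norm h)\<^sup>2 = cmod (l2inner g (T h))"
    by (simp add: l2norm_power2 sqnorm_nonneg)
  also have "\<dots> \<le> l2norm g * l2norm (T h)"
    by (rule l2inner_cauchy_schwarz[OF g bop_l2[OF T h]])
  also have "\<dots> \<le> l2norm g * (C * l2norm h)"
    using C h by (simp add: l2norm_nonneg mult_left_mono)
  finally have "l2norm h * l2norm h \<le> (C * l2norm g) * l2norm h"
    by (simp add: power2_eq_square mult_ac)
  then have "l2norm h \<le> C * l2norm g"
    using C(1) l2norm_nonneg[of g] l2norm_nonneg[of h]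
    by (cases "l2norm h = 0") (auto intro: mult_right_le_imp_le)
  then show ?thesis by (simp add: h_def)
qed

lemma adj_explicit_l2:
  fixes T :: "('a \<Rightarrow> complex) \<Rightarrow> ('b \<Rightarrow> complex)"
  assumes T: "bop T" and C: "C \<ge> 0" "\<And>f. f \<in> l2 \<Longrightarrow> l2norm (T f) \<le> C * l2norm f"
    and g: "g \<in> l2"
  shows "adj_explicit T g \<in> l2" and "l2norm (adj_explicit T g) \<le> C * l2norm g"
proof -
  have partial: "(\<Sum>x\<in>F. (cmod (adj_explicit T g x))\<^sup>2) \<le> (C * l2norm g)\<^sup>2" if F: "finite F" for F
  proof -
    have "(\<Sum>x\<in>F. (cmod (adj_explicit T g x))\<^sup>2) = (l2norm (restrict_vec F (adj_explicit T g)))\<^sup>2"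
      unfolding l2norm_power2 sqnorm_def restrict_vec_def
      by (subst infsum_finite_support[OF F]) (use F in auto)
    also have "\<dots> \<le> (C * l2norm g)\<^sup>2"
      using l2norm_restrict_adj_explicit[OF T C g F] by (simp add: l2norm_nonneg power_mono)
    finally show ?thesis .
  qed
  have sm: "(\<lambda>x. (cmod (adj_explicit T g x))\<^sup>2) summable_on UNIV"
    using partial by (intro nonneg_bdd_above_summable_on bdd_aboveI) auto
  then show "adj_explicit T g \<in> l2" by (simp add: l2_def)
  have "(l2norm (adj_explicit T g))\<^sup>2 \<le> (C * l2norm g)\<^sup>2"
    unfolding l2norm_power2 sqnorm_def using sm partial by (rule infsum_le_finite_sums)
  then show "l2norm (adj_explicit T g) \<le> C * l2norm g"
    by (rule power2_le_imp_le) (simp add: C(1) l2norm_nonneg)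
qed

lemma adj_explicit_bop:
  fixes T :: "('a \<Rightarrow> complex) \<Rightarrow> ('b \<Rightarrow> complex)"
  assumes T: "bop T"
  shows "bop (adj_explicit T)"
proof -
  obtain C where C: "C \<ge> 0" "\<And>f. f \<in> l2 \<Longrightarrow> l2norm (T f) \<le> C * l2norm f"
    using bop_bound[OF T] by blast
  show ?thesis
    by (rule bopI[where C = C])
      (use adj_explicit_l2[OF T C] T in \<open>auto simp: adj_explicit_def l2_lin l2inner_lin_left bop_l2\<close>)
qed

lemma l2inner_bop_restrict_vec_tendsto:
  assumes T: "bop T" and f: "f \<in> l2" and g: "g \<in> l2"
  shows "((\<lambda>F. l2inner g (T (restrict_vec F f))) \<longlongrightarrow> l2inner g (T f)) (finite_subsets_at_top UNIV)"
proof -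
  obtain C where C: "C \<ge> 0" "\<And>f. f \<in> l2 \<Longrightarrow> l2norm (T f) \<le> C * l2norm f"
    using bop_bound[OF T] by blast
  have bound: "cmod (l2inner g (T (restrict_vec F f)) - l2inner g (T f))
      \<le> l2norm g * C * l2norm (\<lambda>y. f y - restrict_vec F f y)" if F: "finite F" for F
  proof -
    have r: "restrict_vec F f \<in> l2" using F by (rule l2_restrict_vec)
    have d: "(\<lambda>y. f y - restrict_vec F f y) \<in> l2" using f r by (rule l2_diff)
    have "cmod (l2inner g (T (restrict_vec F f)) - l2inner g (T f))
        = cmod (l2inner g (T (\<lambda>y. f y - restrict_vec F f y)))"
      using T f r g
      by (simp add: norm_minus_commute bop_diff bop_l2 l2inner_lin_right[of g _ _ "-1", simplified])
    also have "\<dots> \<le> l2norm g * l2norm (T (\<lambda>y. f y - restrict_vec F f y))"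
      by (rule l2inner_cauchy_schwarz[OF g bop_l2[OF T d]])
    also have "\<dots> \<le> l2norm g * (C * l2norm (\<lambda>y. f y - restrict_vec F f y))"
      using C d by (simp add: l2norm_nonneg mult_left_mono)
    finally show ?thesis by (simp add: mult.assoc)
  qed
  have "((\<lambda>F. l2norm g * C * l2norm (\<lambda>y. f y - restrict_vec F f y)) \<longlongrightarrow> 0)
      (finite_subsets_at_top UNIV)"
    using tendsto_mult_right_zero[OF l2norm_minus_restrict_vec_tendsto[OF f]] .
  then have "((\<lambda>F. l2inner g (T (restrict_vec F f)) - l2inner g (T f)) \<longlongrightarrow> 0)
      (finite_subsets_at_top UNIV)"
    by (rule Lim_null_comparison[rotated]) (auto intro!: eventually_finite_subsets_at_top_weakI bound)
  then show ?thesis by (rule LIM_zero_cancel)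
qed

lemma adj_explicit_has_sum:
  assumes T: "bop T" and f: "f \<in> l2" and g: "g \<in> l2"
  shows "((\<lambda>x. cnj (adj_explicit T g x) * f x) has_sum l2inner g (T f)) UNIV"
proof -
  have "(\<Sum>x\<in>F. cnj (adj_explicit T g x) * f x) = l2inner g (T (restrict_vec F f))"
    if F: "finite F" for F
  proof -
    have "l2inner g (T (restrict_vec F f)) = (\<Sum>x\<in>F. f x * l2inner g (T (ket x)))"
      unfolding bop_restrict_vec[OF T F] using g F by (rule l2inner_sum_right) (simp add: T bop_l2)
    then show ?thesis using g by (simp add: adj_explicit_def mult.commute)
  qed
  then show ?thesis
    unfolding has_sum_def using l2inner_bop_restrict_vec_tendsto[OF T f g]
    by (rule_tac Lim_transform_eventually) (auto intro!: eventually_finite_subsets_at_top_weakI)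
qed

lemma is_adj_adj_explicit: "bop T \<Longrightarrow> is_adj T (adj_explicit T)"
  unfolding is_adj_def l2inner_def[of "adj_explicit T _"]
  by (auto intro: adj_explicit_bop infsumI[symmetric] adj_explicit_has_sum)

lemma is_adj_eq_adj_explicit:
  assumes "is_adj T S"
  shows "S = adj_explicit T"
proof (intro ext)
  fix g x
  have "bop S" using assms by (simp add: is_adj_def)
  then show "S g x = adj_explicit T g x"
    using assms by (cases "g \<in> l2") (auto simp: is_adj_def adj_explicit_def l2inner_ket_right bop_nonl2)
qed

lemma adj_eq_adj_explicit: "bop T \<Longrightarrow> adj T = adj_explicit T"
  unfolding adj_def by (rule the_equality) (auto intro: is_adj_adj_explicit is_adj_eq_adj_explicit)

lemma adj_unique: "bop T \<Longrightarrow> is_adj T S \<Longrightarrow> adj T = S"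
  by (metis adj_eq_adj_explicit is_adj_eq_adj_explicit)

lemma adj_bop: "bop T \<Longrightarrow> bop (adj T)"
  by (simp add: adj_eq_adj_explicit adj_explicit_bop)

lemma adj_l2inner: "bop T \<Longrightarrow> f \<in> l2 \<Longrightarrow> g \<in> l2 \<Longrightarrow> l2inner g (T f) = l2inner (adj T g) f"
  using is_adj_adj_explicit[of T] by (simp add: adj_eq_adj_explicit is_adj_def)

lemma adj_apply: "bop T \<Longrightarrow> g \<in> l2 \<Longrightarrow> adj T g x = cnj (l2inner g (T (ket x)))"
  by (simp add: adj_eq_adj_explicit adj_explicit_def)

lemma bop_eqI_ket:
  assumes S: "bop S" and T: "bop T" and eq: "\<And>x. S (ket x) = T (ket x)"
  shows "S = T"
proof (intro ext)
  fix f y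
  show "S f y = T f y"
  proof (cases "f \<in> l2")
    case True
    have "S f y = l2inner (adj S (ket y)) f"
      using S True by (simp flip: adj_l2inner add: l2inner_ket_left)
    also have "adj S (ket y) = adj T (ket y)"
      using S T by (simp add: adj_apply eq fun_eq_iff)
    also have "l2inner (adj T (ket y)) f = T f y"
      using T True by (simp flip: adj_l2inner add: l2inner_ket_left)
    finally show ?thesis .
  qed (use S T in \<open>simp add: bop_nonl2\<close>)
qed

lemma adj_comp:
  fixes S :: "('a \<Rightarrow> complex) \<Rightarrow> ('b \<Rightarrow> complex)" and T :: "('b \<Rightarrow> complex) \<Rightarrow> ('c \<Rightarrow> complex)"
  assumes S: "bop S" and T: "bop T"
  shows "adj (T \<circ> S) = adj S \<circ> adj T"
proof (rule adj_unique)
  show "bop (T \<circ> S)" using S T by (rule bop_comp)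
  show "is_adj (T \<circ> S) (adj S \<circ> adj T)"
    unfolding is_adj_def using S T adj_bop[OF T]
    by (auto intro: bop_comp adj_bop simp: adj_l2inner bop_l2 bop_range_l2)
qed

lemma isometry_bop: "isometry T \<Longrightarrow> bop T"
  by (simp add: isometry_def)

lemma isometry_l2norm: "isometry T \<Longrightarrow> f \<in> l2 \<Longrightarrow> l2norm (T f) = l2norm f"
  by (simp add: isometry_def)

lemma isometry_comp: "isometry S \<Longrightarrow> isometry T \<Longrightarrow> isometry (T \<circ> S)"
  unfolding isometry_def by (auto simp: bop_comp bop_l2)

lemma l2inner_expand:
  assumes f: "f \<in> l2" and g: "g \<in> l2"
  shows "l2inner (\<lambda>x. f x + c * g x) (\<lambda>x. f x + c * g x)
    = l2inner f f + c * l2inner f g + cnj (c * l2inner f g) + c * cnj c * l2inner g g"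
  using l2_lin[OF f g] f g
  by (simp add: l2inner_lin_left l2inner_lin_right l2inner_commute_cnj[of g f] algebra_simps)

text \<open>Polarization: an isometry preserves \<open>Re (c \<langle>f, g\<rangle>)\<close> for every \<open>c\<close>, hence the inner product.\<close>

lemma isometry_l2inner:
  assumes T: "isometry T" and f: "f \<in> l2" and g: "g \<in> l2"
  shows "l2inner (T f) (T g) = l2inner f g"
proof -
  have bT: "bop T" using T by (rule isometry_bop)
  have self: "l2inner (T h) (T h) = l2inner h h" if "h \<in> l2" for h
    using T bT that by (simp add: l2inner_self bop_l2 isometry_l2norm)
  have "c * l2inner (T f) (T g) + cnj (c * l2inner (T f) (T g)) = c * l2inner f g + cnj (c * l2inner f g)"
    for c
    using self[OF l2_lin[OF f g, of c]] bT f g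
    by (simp add: bop_lin l2inner_expand bop_l2 self)
  from this[of 1] this[of \<i>] show ?thesis by (simp add: complex_eq_iff)
qed

lemma isometry_adj_cancel:
  assumes T: "isometry T" and f: "f \<in> l2"
  shows "adj T (T f) = f"
proof (rule ext)
  fix x
  have "adj T (T f) x = cnj (l2inner (T f) (T (ket x)))"
    using T f by (simp add: adj_apply bop_l2 isometry_bop)
  also have "\<dots> = f x" using T f by (simp add: isometry_l2inner l2inner_ket_right)
  finally show "adj T (T f) x = f x" .
qed

definition transp_explicit :: "(('a \<Rightarrow> complex) \<Rightarrow> ('a \<Rightarrow> complex)) \<Rightarrow> (('a \<Rightarrow> complex) \<Rightarrow> ('a \<Rightarrow> complex))" where
  "transp_explicit b = cnj_vec \<circ> adj b \<circ> cnj_vec"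

lemma transp_explicit_bop:
  assumes b: "bop b"
  shows "bop (transp_explicit b)"
proof -
  have ab: "bop (adj b)" using b by (rule adj_bop)
  obtain C where C: "\<And>f. f \<in> l2 \<Longrightarrow> l2norm (adj b f) \<le> C * l2norm f"
    using bop_bound[OF ab] by blast
  show ?thesis
  proof (rule bopI[where C = C])
    fix f :: "'a \<Rightarrow> complex"
    show "f \<in> l2 \<Longrightarrow> transp_explicit b f \<in> l2"
      using ab by (simp add: transp_explicit_def bop_l2)
    show "f \<in> l2 \<Longrightarrow> l2norm (transp_explicit b f) \<le> C * l2norm f"
      using C[of "cnj_vec f"] by (simp add: transp_explicit_def l2norm_sqnorm)
    show "f \<notin> l2 \<Longrightarrow> transp_explicit b f = (\<lambda>_. 0)"
      using ab by (simp add: transp_explicit_def bop_nonl2) (simp add: cnj_vec_def)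
  next
    fix f g :: "'a \<Rightarrow> complex" and c
    assume "f \<in> l2" "g \<in> l2"
    moreover have "cnj_vec (\<lambda>x. f x + c * g x) = (\<lambda>x. cnj_vec f x + cnj c * cnj_vec g x)"
      by (simp add: cnj_vec_def)
    ultimately show "transp_explicit b (\<lambda>x. f x + c * g x)
        = (\<lambda>y. transp_explicit b f y + c * transp_explicit b g y)"
      using ab by (simp add: transp_explicit_def bop_lin) (simp add: cnj_vec_def)
  qed
qed

lemma transp_explicit_ket: "bop b \<Longrightarrow> transp_explicit b (ket j) i = b (ket i) j"
proof -
  assume b: "bop b"
  have "cnj_vec (ket j) = ket j" by (simp add: cnj_vec_def ket_def fun_eq_iff)
  then show ?thesis using b by (simp add: transp_explicit_def adj_apply l2inner_ket_left cnj_vec_def)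
qed

lemma transp_bop_ket:
  assumes "bop b"
  shows "bop (transp b) \<and> (\<forall>i j. transp b (ket j) i = b (ket i) j)"
proof -
  have "bop (transp_explicit b) \<and> (\<forall>i j. transp_explicit b (ket j) i = b (ket i) j)"
    using assms by (simp add: transp_explicit_bop transp_explicit_ket)
  moreover have "c = transp_explicit b" if "bop c \<and> (\<forall>i j. c (ket j) i = b (ket i) j)" for c
    using that calculation by (intro bop_eqI_ket) (auto simp: fun_eq_iff)
  ultimately show ?thesis
    unfolding transp_def by (rule theI)
qed

lemma transp_bop: "bop b \<Longrightarrow> bop (transp b)"
  using transp_bop_ket by blast

lemma transp_ket: "bop b \<Longrightarrow> transp b (ket j) i = b (ket i) j"
  using transp_bop_ket by blast

lemma transp_transp: "bop b \<Longrightarrow> transp (transp b) = b"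
  by (rule bop_eqI_ket) (auto simp: transp_bop transp_ket fun_eq_iff)

lemma transp_idop: "transp idop = idop"
proof (rule bop_eqI_ket)
  fix x
  show "transp idop (ket x) = idop (ket x)"
    unfolding fun_eq_iff transp_ket[OF idop_bop] idop_l2[OF l2_ket] by (simp add: ket_def)
qed (simp_all add: transp_bop idop_bop)

section \<open>Tensor products\<close>

definition vtensor :: "('a \<Rightarrow> complex) \<Rightarrow> ('b \<Rightarrow> complex) \<Rightarrow> ('a \<times> 'b \<Rightarrow> complex)" where
  "vtensor x y = (\<lambda>(i, j). x i * y j)"

lemma vtensor_apply [simp]: "vtensor x y (i, j) = x i * y j"
  by (simp add: vtensor_def)

lemma ket_pair: "ket (i, j) = vtensor (ket i) (ket j)"
  by (auto simp: vtensor_def ket_def fun_eq_iff)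

lemma vtensor_scale_left: "vtensor (\<lambda>i. c * x i) y = (\<lambda>p. c * vtensor x y p)"
  by (auto simp: vtensor_def fun_eq_iff)

lemma vtensor_scale_right: "vtensor x (\<lambda>j. c * y j) = (\<lambda>p. c * vtensor x y p)"
  by (auto simp: vtensor_def fun_eq_iff)

lemma vtensor_lin_left: "vtensor (\<lambda>i. f i + c * g i) y = (\<lambda>p. vtensor f y p + c * vtensor g y p)"
  by (auto simp: vtensor_def fun_eq_iff algebra_simps)

lemma vtensor_lin_right: "vtensor x (\<lambda>j. f j + c * g j) = (\<lambda>p. vtensor x f p + c * vtensor x g p)"
  by (auto simp: vtensor_def fun_eq_iff algebra_simps)

lemma l2_vtensor_sqnorm:
  assumes x: "x \<in> l2" and y: "y \<in> l2"
  shows "vtensor x y \<in> l2" "sqnorm (vtensor x y) = sqnorm x * sqnorm y"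
proof -
  define f where "f = (\<lambda>p. (cmod (vtensor x y p))\<^sup>2)"
  have inner: "((\<lambda>j. f (i, j)) has_sum ((cmod (x i))\<^sup>2 * sqnorm y)) UNIV" for i
    unfolding f_def sqnorm_def using y unfolding l2_def
    by (auto simp: norm_mult power_mult_distrib intro!: has_sum_cmult_right has_sum_infsum)
  have outer: "((\<lambda>i. (cmod (x i))\<^sup>2 * sqnorm y) has_sum (sqnorm x * sqnorm y)) UNIV"
    unfolding sqnorm_def using x unfolding l2_def by (auto intro!: has_sum_cmult_left has_sum_infsum)
  have "f summable_on UNIV \<times> UNIV"
    by (rule summable_on_SigmaI[OF inner has_sum_imp_summable[OF outer]]) (simp add: f_def)
  then show "vtensor x y \<in> l2" by (simp add: l2_def f_def)
  have "(f has_sum (sqnorm x * sqnorm y)) (UNIV \<times> UNIV)"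
    by (rule has_sum_SigmaI[OF inner outer \<open>f summable_on UNIV \<times> UNIV\<close>])
  then show "sqnorm (vtensor x y) = sqnorm x * sqnorm y" unfolding sqnorm_def f_def by (simp add: infsumI)
qed

lemma l2_vtensor: "x \<in> l2 \<Longrightarrow> y \<in> l2 \<Longrightarrow> vtensor x y \<in> l2"
  using l2_vtensor_sqnorm by blast

lemma l2norm_vtensor: "x \<in> l2 \<Longrightarrow> y \<in> l2 \<Longrightarrow> l2norm (vtensor x y) = l2norm x * l2norm y"
  by (simp add: l2norm_sqnorm l2_vtensor_sqnorm(2) real_sqrt_mult)

lemma l2inner_vtensor:
  assumes x: "x \<in> l2" and y: "y \<in> l2" and x': "x' \<in> l2" and y': "y' \<in> l2"
  shows "l2inner (vtensor x y) (vtensor x' y') = l2inner x x' * l2inner y y'"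
proof -
  define f where "f = (\<lambda>p. cnj (vtensor x y p) * vtensor x' y' p)"
  have fe: "f (i, j) = (cnj (x i) * x' i) * (cnj (y j) * y' j)" for i j
    by (simp add: f_def algebra_simps)
  have inner: "((\<lambda>j. f (i, j)) has_sum ((cnj (x i) * x' i) * l2inner y y')) UNIV" for i
    unfolding fe l2inner_def using l2inner_summable[OF y y'] by (auto intro!: has_sum_cmult_right has_sum_infsum)
  have outer: "((\<lambda>i. (cnj (x i) * x' i) * l2inner y y') has_sum (l2inner x x' * l2inner y y')) UNIV"
    unfolding l2inner_def[of x] using l2inner_summable[OF x x'] by (auto intro!: has_sum_cmult_left has_sum_infsum)
  have "f summable_on UNIV \<times> UNIV"
    unfolding f_def using l2inner_summable[OF l2_vtensor[OF x y] l2_vtensor[OF x' y']] by simp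
  then have "(f has_sum (l2inner x x' * l2inner y y')) (UNIV \<times> UNIV)"
    by (rule has_sum_SigmaI[OF inner outer])
  then show ?thesis unfolding l2inner_def[of "vtensor x y"] f_def by (simp add: infsumI)
qed

lemma l2_row: "\<xi> \<in> l2 \<Longrightarrow> (\<lambda>j. \<xi> (i, j)) \<in> l2"
  unfolding l2_def
  using summable_on_reindex[of "Pair i" UNIV "\<lambda>p. (cmod (\<xi> p))\<^sup>2"]
    summable_on_subset_banach[of "\<lambda>p. (cmod (\<xi> p))\<^sup>2" UNIV "range (Pair i)"]
  by (auto simp: inj_on_def o_def)

lemma l2_by_rows:
  fixes \<xi> :: "'a \<times> 'b \<Rightarrow> complex"
  assumes rows: "\<And>i. (\<lambda>j. \<xi> (i, j)) \<in> l2"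
    and sm: "(\<lambda>i. sqnorm (\<lambda>j. \<xi> (i, j))) summable_on UNIV"
  shows "\<xi> \<in> l2" "sqnorm \<xi> = (\<Sum>\<^sub>\<infinity>i. sqnorm (\<lambda>j. \<xi> (i, j)))"
proof -
  define f where "f = (\<lambda>p. (cmod (\<xi> p))\<^sup>2)"
  have inner: "((\<lambda>j. f (i, j)) has_sum sqnorm (\<lambda>j. \<xi> (i, j))) UNIV" for i
    using rows[of i] unfolding f_def sqnorm_def l2_def by simp
  have sm2: "f summable_on UNIV \<times> UNIV"
    by (rule summable_on_SigmaI[OF inner sm]) (simp add: f_def)
  then show "\<xi> \<in> l2" by (simp add: l2_def f_def)
  have "(f has_sum (\<Sum>\<^sub>\<infinity>i. sqnorm (\<lambda>j. \<xi> (i, j)))) (UNIV \<times> UNIV)"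
    by (rule has_sum_SigmaI[OF inner _ sm2]) (use sm in simp)
  then show "sqnorm \<xi> = (\<Sum>\<^sub>\<infinity>i. sqnorm (\<lambda>j. \<xi> (i, j)))" unfolding sqnorm_def f_def by (simp add: infsumI)
qed

lemma sqnorm_by_rows:
  fixes \<xi> :: "'a \<times> 'b \<Rightarrow> complex"
  assumes "\<xi> \<in> l2"
  shows "(\<lambda>i. sqnorm (\<lambda>j. \<xi> (i, j))) summable_on UNIV" "sqnorm \<xi> = (\<Sum>\<^sub>\<infinity>i. sqnorm (\<lambda>j. \<xi> (i, j)))"
proof -
  define f where "f = (\<lambda>p. (cmod (\<xi> p))\<^sup>2)"
  have sm2: "f summable_on UNIV \<times> UNIV" using assms by (simp add: l2_def f_def)
  have inner: "((\<lambda>j. f (i, j)) has_sum sqnorm (\<lambda>j. \<xi> (i, j))) UNIV" for i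
    using l2_row[OF assms, of i] unfolding f_def sqnorm_def l2_def by simp
  have "((\<lambda>i. sqnorm (\<lambda>j. \<xi> (i, j))) has_sum infsum f (UNIV \<times> UNIV)) UNIV"
    by (rule has_sum_SigmaD[OF has_sum_infsum[OF sm2] inner])
  then show "(\<lambda>i. sqnorm (\<lambda>j. \<xi> (i, j))) summable_on UNIV" "sqnorm \<xi> = (\<Sum>\<^sub>\<infinity>i. sqnorm (\<lambda>j. \<xi> (i, j)))"
    by (auto simp: has_sum_imp_summable sqnorm_def f_def infsumI)
qed

lemma tensor_right_rows: "\<xi> \<in> l2 \<Longrightarrow> (\<lambda>l. tensor_right b \<xi> (i, l)) = b (\<lambda>j. \<xi> (i, j))"
  by (simp add: tensor_right_def)

lemma tensor_right_bop:
  fixes b :: "('b \<Rightarrow> complex) \<Rightarrow> ('d \<Rightarrow> complex)"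
  assumes b: "bop b"
  shows "bop (tensor_right b :: ('a \<times> 'b \<Rightarrow> complex) \<Rightarrow> _)"
proof -
  obtain C where C: "C \<ge> 0" "\<And>f. f \<in> l2 \<Longrightarrow> l2norm (b f) \<le> C * l2norm f"
    using bop_bound[OF b] by blast
  have C2: "sqnorm (b f) \<le> C\<^sup>2 * sqnorm f" if "f \<in> l2" for f
    using power_mono[OF C(2)[OF that] l2norm_nonneg, of 2]
    by (simp add: l2norm_power2 power_mult_distrib)
  show ?thesis
  proof (rule bopI[where C = C])
    fix \<xi> :: "'a \<times> 'b \<Rightarrow> complex" assume \<xi>: "\<xi> \<in> l2"
    note rows = tensor_right_rows[OF \<xi>, of b]
    have sm0: "(\<lambda>i. sqnorm (\<lambda>j. \<xi> (i, j))) summable_on UNIV"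
      using sqnorm_by_rows[OF \<xi>] by simp
    have sm: "(\<lambda>i. sqnorm (\<lambda>l. tensor_right b \<xi> (i, l))) summable_on UNIV"
      unfolding rows
      by (rule summable_on_comparison_test[OF summable_on_cmult_right[OF sm0, of "C\<^sup>2"]])
        (auto intro: C2 l2_row[OF \<xi>] sqnorm_nonneg)
    have rows_l2: "(\<lambda>l. tensor_right b \<xi> (i, l)) \<in> l2" for i
      unfolding rows using b l2_row[OF \<xi>] by (rule bop_l2)
    show "tensor_right b \<xi> \<in> l2" using l2_by_rows(1)[OF rows_l2 sm] .
    have "sqnorm (tensor_right b \<xi>) = (\<Sum>\<^sub>\<infinity>i. sqnorm (b (\<lambda>j. \<xi> (i, j))))"
      using l2_by_rows(2)[OF rows_l2 sm] unfolding rows .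
    also have "\<dots> \<le> (\<Sum>\<^sub>\<infinity>i. C\<^sup>2 * sqnorm (\<lambda>j. \<xi> (i, j)))"
      using sm[unfolded rows] summable_on_cmult_right[OF sm0] C2 l2_row[OF \<xi>]
      by (intro infsum_mono) auto
    also have "\<dots> = C\<^sup>2 * sqnorm \<xi>"
      by (simp add: infsum_cmult_right' sqnorm_by_rows(2)[OF \<xi>])
    finally have "(l2norm (tensor_right b \<xi>))\<^sup>2 \<le> (C * l2norm \<xi>)\<^sup>2"
      by (simp add: l2norm_power2 power_mult_distrib)
    then show "l2norm (tensor_right b \<xi>) \<le> C * l2norm \<xi>"
      by (rule power2_le_imp_le) (simp add: C(1) l2norm_nonneg)
  next
    fix f g :: "'a \<times> 'b \<Rightarrow> complex" and c
    assume f: "f \<in> l2" and g: "g \<in> l2"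
    have "b (\<lambda>j. f (i, j) + c * g (i, j)) = (\<lambda>l. b (\<lambda>j. f (i, j)) l + c * b (\<lambda>j. g (i, j)) l)" for i
      using b l2_row[OF f] l2_row[OF g] by (rule bop_lin)
    then show "tensor_right b (\<lambda>x. f x + c * g x) = (\<lambda>y. tensor_right b f y + c * tensor_right b g y)"
      using f g by (auto simp: tensor_right_def l2_lin fun_eq_iff)
  qed (simp add: tensor_right_def)
qed

definition swap_vec :: "('a \<times> 'b \<Rightarrow> complex) \<Rightarrow> ('b \<times> 'a \<Rightarrow> complex)" where
  "swap_vec f = (if f \<in> l2 then (\<lambda>(j, i). f (i, j)) else (\<lambda>_. 0))"

lemma l2_swap_iff: "(\<lambda>(j, i). f (i, j)) \<in> l2 \<longleftrightarrow> f \<in> l2"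
  unfolding l2_def
  using summable_on_reindex_bij_betw[OF bij_swap, of "\<lambda>p. (cmod (f p))\<^sup>2"]
  by (simp add: case_prod_unfold prod.swap_def)

lemma sqnorm_swap: "sqnorm (\<lambda>(j, i). f (i, j)) = sqnorm f"
  unfolding sqnorm_def
  using infsum_reindex_bij_betw[OF bij_swap, of "\<lambda>p. (cmod (f p))\<^sup>2"]
  by (simp add: case_prod_unfold prod.swap_def)

lemma swap_vec_bop: "bop swap_vec"
  by (rule bopI[where C = 1])
    (auto simp: swap_vec_def l2_swap_iff l2norm_sqnorm sqnorm_swap l2_lin fun_eq_iff)

lemma tensor_left_eq_swap:
  fixes a :: "('a \<Rightarrow> complex) \<Rightarrow> ('c \<Rightarrow> complex)"
  assumes a: "bop a"
  shows "(tensor_left a :: ('a \<times> 'b \<Rightarrow> complex) \<Rightarrow> _) = swap_vec \<circ> tensor_right a \<circ> swap_vec"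
proof (rule ext)
  fix \<xi> :: "'a \<times> 'b \<Rightarrow> complex"
  show "tensor_left a \<xi> = (swap_vec \<circ> tensor_right a \<circ> swap_vec) \<xi>"
  proof (cases "\<xi> \<in> l2")
    case True
    then have "swap_vec \<xi> \<in> l2" by (simp add: swap_vec_def l2_swap_iff)
    moreover from this have "tensor_right a (swap_vec \<xi>) \<in> l2"
      by (rule bop_l2[OF tensor_right_bop[OF a]])
    ultimately show ?thesis
      using True by (auto simp: swap_vec_def tensor_left_def tensor_right_def fun_eq_iff)
  next
    case False
    then have "swap_vec \<xi> = (\<lambda>_. 0)" by (simp add: swap_vec_def)
    then have "tensor_right a (swap_vec \<xi>) = (\<lambda>_. 0)"
      using bop_zero[OF tensor_right_bop[OF a]] by simp
    then show ?thesis using False by (simp add: swap_vec_def tensor_left_def case_prod_unfold)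
  qed
qed

lemma tensor_left_bop:
  fixes a :: "('a \<Rightarrow> complex) \<Rightarrow> ('c \<Rightarrow> complex)"
  assumes a: "bop a"
  shows "bop (tensor_left a :: ('a \<times> 'b \<Rightarrow> complex) \<Rightarrow> _)"
  unfolding tensor_left_eq_swap[OF a] by (intro bop_comp swap_vec_bop tensor_right_bop a)

lemma optensor_bop: "bop A \<Longrightarrow> bop B \<Longrightarrow> bop (optensor A B)"
  unfolding optensor_def by (intro bop_comp tensor_left_bop tensor_right_bop)

lemma tensor_left_vtensor:
  assumes "bop a" "x \<in> l2" "y \<in> l2"
  shows "tensor_left a (vtensor x y) = vtensor (a x) y"
proof -
  have "a (\<lambda>i. x i * y j) = (\<lambda>k. y j * a x k)" for j
    using bop_scale[OF assms(1,2), of "y j"] by (simp add: mult.commute)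
  then show ?thesis using l2_vtensor[OF assms(2,3)] by (auto simp: tensor_left_def fun_eq_iff)
qed

lemma tensor_right_vtensor:
  assumes "bop b" "x \<in> l2" "y \<in> l2"
  shows "tensor_right b (vtensor x y) = vtensor x (b y)"
proof -
  have "b (\<lambda>j. x i * y j) = (\<lambda>k. x i * b y k)" for i
    using bop_scale[OF assms(1,3), of "x i"] by simp
  then show ?thesis using l2_vtensor[OF assms(2,3)] by (auto simp: tensor_right_def fun_eq_iff)
qed

lemma optensor_vtensor:
  "bop A \<Longrightarrow> bop B \<Longrightarrow> x \<in> l2 \<Longrightarrow> y \<in> l2 \<Longrightarrow> optensor A B (vtensor x y) = vtensor (A x) (B y)"
  by (simp add: optensor_def tensor_left_vtensor tensor_right_vtensor bop_range_l2)

lemma tensor_right_idop: "\<xi> \<in> l2 \<Longrightarrow> tensor_right idop \<xi> = \<xi>"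
  by (auto simp: tensor_right_def l2_row fun_eq_iff)

definition matrix_unit :: "'a \<Rightarrow> 'a \<Rightarrow> ('a \<Rightarrow> complex) \<Rightarrow> ('a \<Rightarrow> complex)" where
  "matrix_unit k l f = (if f \<in> l2 then (\<lambda>x. f l * ket k x) else (\<lambda>_. 0))"

lemma matrix_unit_bop: "bop (matrix_unit k l)"
proof (rule bopI[where C = 1])
  fix f :: "'a \<Rightarrow> complex"
  assume f: "f \<in> l2"
  have "l2norm (matrix_unit k l f) = sqrt ((cmod (f l))\<^sup>2)"
    using f by (simp add: matrix_unit_def l2norm_scale)
  also have "\<dots> \<le> l2norm f"
    unfolding l2norm_sqnorm using sqnorm_ge_component[OF f] by (rule real_sqrt_le_mono)
  finally show "l2norm (matrix_unit k l f) \<le> 1 * l2norm f" by simp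
qed (auto simp: matrix_unit_def l2_scale l2_lin algebra_simps)

lemma matrix_unit_ket: "matrix_unit k l (ket m) = (if m = l then ket k else (\<lambda>_. 0))"
proof -
  have "matrix_unit k l (ket m) = (\<lambda>x. ket m l * ket k x)" by (simp add: matrix_unit_def)
  then show ?thesis by (auto simp: ket_def fun_eq_iff)
qed

lemma optensor_matrix_unit:
  "optensor (matrix_unit i k) (matrix_unit j l) = matrix_unit (i, j) (k, l)"
proof (rule bop_eqI_ket)
  fix p :: "'a \<times> 'b"
  obtain a b where p: "p = (a, b)" by (cases p)
  have "optensor (matrix_unit i k) (matrix_unit j l) (ket (a, b))
      = vtensor (matrix_unit i k (ket a)) (matrix_unit j l (ket b))"
    unfolding ket_pair by (simp add: optensor_vtensor matrix_unit_bop)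
  also have "\<dots> = (if (a, b) = (k, l) then ket (i, j) else (\<lambda>_. 0))"
    by (auto simp: matrix_unit_ket ket_pair vtensor_def fun_eq_iff)
  also have "\<dots> = matrix_unit (i, j) (k, l) (ket (a, b))"
    by (simp only: matrix_unit_ket)
  finally show "optensor (matrix_unit i k) (matrix_unit j l) (ket p) = matrix_unit (i, j) (k, l) (ket p)"
    by (simp add: p)
qed (simp_all add: optensor_bop matrix_unit_bop)

definition tensor_fixed_fst :: "('a \<Rightarrow> complex) \<Rightarrow> ('b \<Rightarrow> complex) \<Rightarrow> ('a \<times> 'b \<Rightarrow> complex)" where
  "tensor_fixed_fst x = (\<lambda>y. if y \<in> l2 then vtensor x y else (\<lambda>_. 0))"

definition tensor_fixed_snd :: "('b \<Rightarrow> complex) \<Rightarrow> ('a \<Rightarrow> complex) \<Rightarrow> ('a \<times> 'b \<Rightarrow> complex)" where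
  "tensor_fixed_snd y = (\<lambda>x. if x \<in> l2 then vtensor x y else (\<lambda>_. 0))"

lemma tensor_fixed_fst_bop: "x \<in> l2 \<Longrightarrow> bop (tensor_fixed_fst x)"
  by (rule bopI[where C = "l2norm x"])
    (simp_all add: tensor_fixed_fst_def l2_vtensor l2norm_vtensor l2_lin vtensor_lin_right)

lemma tensor_fixed_snd_bop: "y \<in> l2 \<Longrightarrow> bop (tensor_fixed_snd y)"
  by (rule bopI[where C = "l2norm y"])
    (simp_all add: tensor_fixed_snd_def l2_vtensor l2norm_vtensor l2_lin vtensor_lin_left mult.commute)

lemma adj_tensor_fixed_fst_vtensor:
  assumes x0: "x0 \<in> l2" and x: "x \<in> l2" and y: "y \<in> l2"
  shows "adj (tensor_fixed_fst x0) (vtensor x y) = (\<lambda>k. l2inner x0 x * y k)"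
proof (rule ext)
  fix k
  have "adj (tensor_fixed_fst x0) (vtensor x y) k = cnj (l2inner (vtensor x y) (vtensor x0 (ket k)))"
    using x0 x y by (simp add: adj_apply tensor_fixed_fst_bop l2_vtensor) (simp add: tensor_fixed_fst_def)
  also have "\<dots> = l2inner x0 x * y k"
    using x0 x y by (simp add: l2inner_vtensor l2inner_ket_right l2inner_commute_cnj[of x x0])
  finally show "adj (tensor_fixed_fst x0) (vtensor x y) k = l2inner x0 x * y k" .
qed

lemma adj_tensor_fixed_snd_vtensor:
  assumes y0: "y0 \<in> l2" and x: "x \<in> l2" and y: "y \<in> l2"
  shows "adj (tensor_fixed_snd y0) (vtensor x y) = (\<lambda>k. l2inner y0 y * x k)"
proof (rule ext)
  fix k
  have "adj (tensor_fixed_snd y0) (vtensor x y) k = cnj (l2inner (vtensor x y) (vtensor (ket k) y0))"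
    using y0 x y by (simp add: adj_apply tensor_fixed_snd_bop l2_vtensor) (simp add: tensor_fixed_snd_def)
  also have "\<dots> = l2inner y0 y * x k"
    using y0 x y by (simp add: l2inner_vtensor l2inner_ket_right l2inner_commute_cnj[of y y0])
  finally show "adj (tensor_fixed_snd y0) (vtensor x y) k = l2inner y0 y * x k" .
qed

section \<open>Isometries that are tensor products\<close>

lemma optensor_if_kets_vtensor:
  fixes V :: "('ia \<times> 'ib \<Rightarrow> complex) \<Rightarrow> ('ka \<times> 'kb \<Rightarrow> complex)"
  assumes V: "bop V" and p: "\<And>i. p i \<in> l2" and q: "\<And>j. q j \<in> l2"
    and V_ket: "\<And>i j. V (ket (i, j)) = vtensor (p i) (q j)"
    and w: "w \<in> l2" and z: "z \<in> l2" and normalized: "l2inner w (q j0) * l2inner z (p i0) = 1"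
  obtains VA VB where "bop VA" "bop VB" "V = optensor VA VB"
    "\<And>i. VA (ket i) = (\<lambda>k. l2inner w (q j0) * p i k)"
    "\<And>j. VB (ket j) = (\<lambda>l. l2inner z (p i0) * q j l)"
proof -
  define VA where "VA = adj (tensor_fixed_snd w) \<circ> V \<circ> tensor_fixed_snd (ket j0)"
  define VB where "VB = adj (tensor_fixed_fst z) \<circ> V \<circ> tensor_fixed_fst (ket i0)"
  have bVA: "bop VA"
    unfolding VA_def by (intro bop_comp tensor_fixed_snd_bop adj_bop V w l2_ket)
  have bVB: "bop VB"
    unfolding VB_def by (intro bop_comp tensor_fixed_fst_bop adj_bop V z l2_ket)
  have VA_ket: "VA (ket i) = (\<lambda>k. l2inner w (q j0) * p i k)" for i
  proof -
    have "VA (ket i) = adj (tensor_fixed_snd w) (V (ket (i, j0)))"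
      by (simp add: VA_def tensor_fixed_snd_def ket_pair)
    then show ?thesis by (simp add: V_ket adj_tensor_fixed_snd_vtensor w p q)
  qed
  have VB_ket: "VB (ket j) = (\<lambda>l. l2inner z (p i0) * q j l)" for j
  proof -
    have "VB (ket j) = adj (tensor_fixed_fst z) (V (ket (i0, j)))"
      by (simp add: VB_def tensor_fixed_fst_def ket_pair)
    then show ?thesis by (simp add: V_ket adj_tensor_fixed_fst_vtensor z p q)
  qed
  have "V = optensor VA VB"
  proof (rule bop_eqI_ket[OF V optensor_bop[OF bVA bVB]])
    fix x :: "'ia \<times> 'ib"
    obtain i j where x: "x = (i, j)" by (cases x)
    have "optensor VA VB (ket (i, j)) = vtensor (VA (ket i)) (VB (ket j))"
      by (simp add: ket_pair optensor_vtensor bVA bVB)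
    also have "\<dots> = V (ket (i, j))"
      by (simp add: VA_ket VB_ket V_ket vtensor_scale_left vtensor_scale_right normalized
          flip: mult.assoc)
    finally show "V (ket x) = optensor VA VB (ket x)" by (simp add: x)
  qed
  with that bVA bVB VA_ket VB_ket show ?thesis by blast
qed

lemma isometry_optensor_factors:
  fixes A :: "('a \<Rightarrow> complex) \<Rightarrow> ('c \<Rightarrow> complex)" and B :: "('b \<Rightarrow> complex) \<Rightarrow> ('d \<Rightarrow> complex)"
  assumes V: "isometry (optensor A B)" and A: "bop A" and B: "bop B"
    and A_unit: "l2norm (A (ket i0)) = 1" and B_unit: "l2norm (B (ket j0)) = 1"
  shows "isometry A" "isometry B"
proof -
  show "isometry A"
    unfolding isometry_def
  proof (intro conjI ballI A)
    fix x :: "'a \<Rightarrow> complex" assume x: "x \<in> l2"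
    have "l2norm x = l2norm (optensor A B (vtensor x (ket j0)))"
      using V x by (simp add: isometry_l2norm l2_vtensor l2norm_vtensor)
    also have "\<dots> = l2norm (A x)"
      using A B x B_unit by (simp add: optensor_vtensor l2norm_vtensor bop_range_l2)
    finally show "l2norm (A x) = l2norm x" by simp
  qed
  show "isometry B"
    unfolding isometry_def
  proof (intro conjI ballI B)
    fix y :: "'b \<Rightarrow> complex" assume y: "y \<in> l2"
    have "l2norm y = l2norm (optensor A B (vtensor (ket i0) y))"
      using V y by (simp add: isometry_l2norm l2_vtensor l2norm_vtensor)
    also have "\<dots> = l2norm (B y)"
      using A B y A_unit by (simp add: optensor_vtensor l2norm_vtensor bop_range_l2)
    finally show "l2norm (B y) = l2norm y" by simp
  qed
qed

lemma isometry_split_if_kets_vtensor: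
  fixes V :: "('ia \<times> 'ib \<Rightarrow> complex) \<Rightarrow> ('ka \<times> 'kb \<Rightarrow> complex)"
  assumes V: "isometry V" and p: "\<And>i. p i \<in> l2" and q: "\<And>j. q j \<in> l2"
    and V_ket: "\<And>i j. V (ket (i, j)) = vtensor (p i) (q j)"
  obtains VA VB where "isometry VA" "isometry VB" "V = optensor VA VB"
proof -
  obtain i0 :: 'ia and j0 :: 'ib where True by simp
  define np where "np = l2norm (p i0)"
  define nq where "nq = l2norm (q j0)"
  have np_nq: "np * nq = 1"
    using isometry_l2norm[OF V l2_ket[of "(i0, j0)"]] p q
    by (simp add: np_def nq_def V_ket l2norm_vtensor)
  then have "np \<noteq> 0" "nq \<noteq> 0" by auto
  have inner_w: "l2inner (\<lambda>j. complex_of_real (1 / nq) * q j0 j) (q j0) = nq"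
    unfolding l2inner_scale_left l2inner_self[OF q] using \<open>nq \<noteq> 0\<close>
    by (simp add: nq_def power2_eq_square)
  have inner_z: "l2inner (\<lambda>i. complex_of_real (1 / np) * p i0 i) (p i0) = np"
    unfolding l2inner_scale_left l2inner_self[OF p] using \<open>np \<noteq> 0\<close>
    by (simp add: np_def power2_eq_square)
  have "l2inner (\<lambda>j. complex_of_real (1 / nq) * q j0 j) (q j0)
      * l2inner (\<lambda>i. complex_of_real (1 / np) * p i0 i) (p i0) = 1"
    unfolding inner_w inner_z using np_nq by (simp flip: of_real_mult add: mult.commute)
  from optensor_if_kets_vtensor[OF isometry_bop[OF V] p q V_ket l2_scale[OF q] l2_scale[OF p] this]
  obtain VA VB where VA: "bop VA" and VB: "bop VB" and V_eq: "V = optensor VA VB"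
    and VA_ket: "\<And>i. VA (ket i) = (\<lambda>k. complex_of_real nq * p i k)"
    and VB_ket: "\<And>j. VB (ket j) = (\<lambda>l. complex_of_real np * q j l)"
    unfolding inner_w inner_z by blast
  have "l2norm (VA (ket i0)) = 1" "l2norm (VB (ket j0)) = 1"
    unfolding VA_ket VB_ket l2norm_scale using np_nq
    by (simp_all add: np_def nq_def l2norm_nonneg mult.commute)
  then show ?thesis
    using isometry_optensor_factors[OF V[unfolded V_eq] VA VB] V_eq that by blast
qed

section \<open>Covariant isometries\<close>

definition left_covariant :: "(('ia \<times> 'ib \<Rightarrow> complex) \<Rightarrow> ('ka \<times> 'kb \<Rightarrow> complex)) \<Rightarrow> bool" where
  "left_covariant V \<longleftrightarrow> (\<forall>a :: ('ia \<Rightarrow> complex) \<Rightarrow> ('ia \<Rightarrow> complex). bop a \<longrightarrow>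
     (\<exists>a' :: ('ka \<Rightarrow> complex) \<Rightarrow> ('ka \<Rightarrow> complex).
        bop a' \<and> (\<forall>\<xi>\<in>l2. V (tensor_left a \<xi>) = tensor_left a' (V \<xi>))))"

definition right_covariant :: "(('ia \<times> 'ib \<Rightarrow> complex) \<Rightarrow> ('ka \<times> 'kb \<Rightarrow> complex)) \<Rightarrow> bool" where
  "right_covariant V \<longleftrightarrow> (\<forall>b :: ('ib \<Rightarrow> complex) \<Rightarrow> ('ib \<Rightarrow> complex). bop b \<longrightarrow>
     (\<exists>b' :: ('kb \<Rightarrow> complex) \<Rightarrow> ('kb \<Rightarrow> complex).
        bop b' \<and> (\<forall>\<xi>\<in>l2. V (tensor_right b \<xi>) = tensor_right b' (V \<xi>))))"

lemma covariantE:
  fixes V :: "('ia \<times> 'ib \<Rightarrow> complex) \<Rightarrow> ('ka \<times> 'kb \<Rightarrow> complex)"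
  assumes "left_covariant V" "right_covariant V"
  obtains \<phi> :: "(('ia \<Rightarrow> complex) \<Rightarrow> ('ia \<Rightarrow> complex)) \<Rightarrow> (('ka \<Rightarrow> complex) \<Rightarrow> ('ka \<Rightarrow> complex))"
    and \<psi> :: "(('ib \<Rightarrow> complex) \<Rightarrow> ('ib \<Rightarrow> complex)) \<Rightarrow> (('kb \<Rightarrow> complex) \<Rightarrow> ('kb \<Rightarrow> complex))"
  where "\<And>a. bop a \<Longrightarrow> bop (\<phi> a)" "\<And>b. bop b \<Longrightarrow> bop (\<psi> b)"
    "\<And>a b \<xi>. bop a \<Longrightarrow> bop b \<Longrightarrow> \<xi> \<in> l2 \<Longrightarrow> V (optensor a b \<xi>) = optensor (\<phi> a) (\<psi> b) (V \<xi>)"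
proof -
  obtain \<phi> where \<phi>: "\<And>a. bop a \<Longrightarrow> bop (\<phi> a) \<and> (\<forall>\<xi>\<in>l2. V (tensor_left a \<xi>) = tensor_left (\<phi> a) (V \<xi>))"
    using assms(1) unfolding left_covariant_def by metis
  obtain \<psi> where \<psi>: "\<And>b. bop b \<Longrightarrow> bop (\<psi> b) \<and> (\<forall>\<xi>\<in>l2. V (tensor_right b \<xi>) = tensor_right (\<psi> b) (V \<xi>))"
    using assms(2) unfolding right_covariant_def by metis
  have "V (optensor a b \<xi>) = optensor (\<phi> a) (\<psi> b) (V \<xi>)" if "bop a" "bop b" "\<xi> \<in> l2" for a b \<xi>
    using \<phi>[OF that(1)] \<psi>[OF that(2)] bop_l2[OF tensor_right_bop[OF that(2)] that(3)] that(3)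
    by (simp add: optensor_def)
  with that \<phi> \<psi> show ?thesis by blast
qed

lemma vtensor_if_outer_products_vtensor:
  assumes outer: "\<And>k l. (\<lambda>z. cnj (\<omega> (k, l)) * \<omega> z) = vtensor (x k) (y l)"
    and x: "\<And>k. x k \<in> l2" and y: "\<And>l. y l \<in> l2"
  obtains u v where "u \<in> l2" "v \<in> l2" "\<omega> = vtensor u v"
proof (cases "\<exists>k l. \<omega> (k, l) \<noteq> 0")
  case True
  then obtain k l where kl: "\<omega> (k, l) \<noteq> 0" by blast
  have "\<omega> z = vtensor (\<lambda>i. inverse (cnj (\<omega> (k, l))) * x k i) (y l) z" for z
  proof -
    have "\<omega> z = inverse (cnj (\<omega> (k, l))) * (cnj (\<omega> (k, l)) * \<omega> z)" using kl by simp
    also have "\<dots> = inverse (cnj (\<omega> (k, l))) * vtensor (x k) (y l) z"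
      using fun_cong[OF outer[of k l], of z] by simp
    finally show ?thesis by (simp add: vtensor_scale_left)
  qed
  then show ?thesis using that l2_scale[OF x] y by blast
next
  case False
  then have "\<omega> = vtensor (\<lambda>_. 0) (\<lambda>_. 0)" by (auto simp: vtensor_def fun_eq_iff)
  then show ?thesis by (rule that[OF l2_zero l2_zero])
qed

text \<open>The rank-one projection onto \<open>\<omega> = V (e\<^sub>i\<^sub>0 \<otimes> e\<^sub>j\<^sub>0)\<close> is \<open>V P V\<^sup>*\<close> with \<open>P\<close> the projection onto
  \<open>e\<^sub>i\<^sub>0 \<otimes> e\<^sub>j\<^sub>0\<close>; covariance moves \<open>P\<close> past \<open>V\<close>, so it is a product operator times \<open>V V\<^sup>*\<close>. Testing on
  basis vectors shows that every \<open>\<omega>(k,l)\<^sup>* \<omega>\<close> is a product vector.\<close>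

lemma covariant_image_ket_vtensor:
  fixes V :: "('ia \<times> 'ib \<Rightarrow> complex) \<Rightarrow> ('ka \<times> 'kb \<Rightarrow> complex)"
  assumes V: "bop V" and cov: "left_covariant V" "right_covariant V"
    and \<alpha>: "bop \<alpha>" and \<beta>: "bop \<beta>" and VV: "\<And>g. V (adj V g) = tensor_right \<beta> (tensor_left \<alpha> g)"
  obtains u v where "u \<in> l2" "v \<in> l2" "V (ket (i0, j0)) = vtensor u v"
proof -
  obtain \<phi> \<psi> where \<phi>: "\<And>a. bop a \<Longrightarrow> bop (\<phi> a)" and \<psi>: "\<And>b. bop b \<Longrightarrow> bop (\<psi> b)"
    and intertwine: "\<And>a b \<xi>. bop a \<Longrightarrow> bop b \<Longrightarrow> \<xi> \<in> l2 \<Longrightarrow> V (optensor a b \<xi>) = optensor (\<phi> a) (\<psi> b) (V \<xi>)"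
    using covariantE[OF cov] by blast
  define \<omega> where "\<omega> = V (ket (i0, j0))"
  define P where "P = optensor (matrix_unit i0 i0) (matrix_unit j0 j0)"
  have outer: "(\<lambda>z. cnj (\<omega> (k, l)) * \<omega> z)
      = vtensor (\<phi> (matrix_unit i0 i0) (\<alpha> (ket k))) (\<psi> (matrix_unit j0 j0) (\<beta> (ket l)))" for k l
  proof -
    define h where "h = adj V (ket (k, l))"
    have h: "h \<in> l2" unfolding h_def by (rule bop_range_l2[OF adj_bop[OF V]])
    have "(\<lambda>z. cnj (\<omega> (k, l)) * \<omega> z) = V (P h)"
      using h V by (simp add: P_def \<omega>_def h_def optensor_matrix_unit matrix_unit_def bop_scale adj_apply
          l2inner_ket_left)
    also have "\<dots> = optensor (\<phi> (matrix_unit i0 i0)) (\<psi> (matrix_unit j0 j0)) (V h)"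
      unfolding P_def using h by (simp add: intertwine matrix_unit_bop)
    also have "V h = vtensor (\<alpha> (ket k)) (\<beta> (ket l))"
      unfolding h_def VV ket_pair using \<alpha> \<beta> by (simp add: tensor_left_vtensor tensor_right_vtensor bop_range_l2)
    finally show ?thesis
      using \<alpha> \<beta> \<phi> \<psi> by (simp add: optensor_vtensor matrix_unit_bop bop_range_l2)
  qed
  from vtensor_if_outer_products_vtensor[of \<omega> "\<lambda>k. \<phi> (matrix_unit i0 i0) (\<alpha> (ket k))"
      "\<lambda>l. \<psi> (matrix_unit j0 j0) (\<beta> (ket l))", OF outer
      bop_range_l2[OF \<phi>[OF matrix_unit_bop]] bop_range_l2[OF \<psi>[OF matrix_unit_bop]]]
  show ?thesis using that unfolding \<omega>_def .
qed

lemma covariant_kets_vtensor: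
  fixes V :: "('ia \<times> 'ib \<Rightarrow> complex) \<Rightarrow> ('ka \<times> 'kb \<Rightarrow> complex)"
  assumes cov: "left_covariant V" "right_covariant V"
    and u: "u \<in> l2" and v: "v \<in> l2" and V_ket: "V (ket (i0, j0)) = vtensor u v"
  obtains p q where "\<And>i. p i \<in> l2" "\<And>j. q j \<in> l2" "\<And>i j. V (ket (i, j)) = vtensor (p i) (q j)"
proof -
  obtain \<phi> \<psi> where \<phi>: "\<And>a. bop a \<Longrightarrow> bop (\<phi> a)" and \<psi>: "\<And>b. bop b \<Longrightarrow> bop (\<psi> b)"
    and intertwine: "\<And>a b \<xi>. bop a \<Longrightarrow> bop b \<Longrightarrow> \<xi> \<in> l2 \<Longrightarrow> V (optensor a b \<xi>) = optensor (\<phi> a) (\<psi> b) (V \<xi>)"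
    using covariantE[OF cov] by blast
  have p: "\<phi> (matrix_unit i i0) u \<in> l2" for i
    by (rule bop_range_l2[OF \<phi>[OF matrix_unit_bop]])
  have q: "\<psi> (matrix_unit j j0) v \<in> l2" for j
    by (rule bop_range_l2[OF \<psi>[OF matrix_unit_bop]])
  have "V (ket (i, j)) = vtensor (\<phi> (matrix_unit i i0) u) (\<psi> (matrix_unit j j0) v)" for i j
  proof -
    have "ket (i, j) = optensor (matrix_unit i i0) (matrix_unit j j0) (ket (i0, j0))"
      by (simp add: optensor_matrix_unit matrix_unit_ket)
    then show ?thesis
      using u v \<phi> \<psi> by (simp add: intertwine matrix_unit_bop V_ket optensor_vtensor)
  qed
  then show ?thesis by (rule that[OF p q])
qed

lemma covariant_isometry_split:
  fixes V :: "('ia \<times> 'ib \<Rightarrow> complex) \<Rightarrow> ('ka \<times> 'kb \<Rightarrow> complex)"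
  assumes V: "isometry V" and cov: "left_covariant V" "right_covariant V"
    and \<alpha>: "bop \<alpha>" and \<beta>: "bop \<beta>" and VV: "\<And>g. V (adj V g) = tensor_right \<beta> (tensor_left \<alpha> g)"
  obtains VA VB where "isometry VA" "isometry VB" "V = optensor VA VB"
proof -
  obtain i0 :: 'ia and j0 :: 'ib where True by simp
  obtain u v where u: "u \<in> l2" and v: "v \<in> l2" and V_ket: "V (ket (i0, j0)) = vtensor u v"
    using covariant_image_ket_vtensor[OF isometry_bop[OF V] cov \<alpha> \<beta> VV] .
  obtain p q where p: "\<And>i. p i \<in> l2" and q: "\<And>j. q j \<in> l2"
    and V_kets: "\<And>i j. V (ket (i, j)) = vtensor (p i) (q j)"
    using covariant_kets_vtensor[OF cov u v V_ket] by blast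
  obtain VA VB where "isometry VA" "isometry VB" "V = optensor VA VB"
    using isometry_split_if_kets_vtensor[OF V p q V_kets] by blast
  then show ?thesis by (rule that)
qed

section \<open>Local isometries between standard systems\<close>

lemma left_covariant_comp_local:
  fixes T :: "('ia \<times> 'ib \<Rightarrow> complex) \<Rightarrow> ('l \<Rightarrow> complex)"
    and S :: "('l \<Rightarrow> complex) \<Rightarrow> ('ka \<times> 'kb \<Rightarrow> complex)"
    and LA :: "(('ia \<Rightarrow> complex) \<Rightarrow> ('ia \<Rightarrow> complex)) \<Rightarrow> (('l \<Rightarrow> complex) \<Rightarrow> ('l \<Rightarrow> complex))"
    and LB :: "(('kb \<Rightarrow> complex) \<Rightarrow> ('kb \<Rightarrow> complex)) \<Rightarrow> (('l \<Rightarrow> complex) \<Rightarrow> ('l \<Rightarrow> complex))"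
  assumes T: "B_local stdA stdB LA LB T" and S: "isometry S" "A_local LA LB stdA stdB S"
  shows "left_covariant (S \<circ> T)"
  unfolding left_covariant_def
proof (intro allI impI)
  fix a :: "('ia \<Rightarrow> complex) \<Rightarrow> ('ia \<Rightarrow> complex)"
  assume a: "bop a"
  obtain a' where a': "bop a'" and conj: "S \<circ> LA a \<circ> adj S = stdA a'"
    using S(2) a unfolding A_local_def by blast
  have "(S \<circ> T) (tensor_left a \<xi>) = tensor_left a' ((S \<circ> T) \<xi>)" if \<xi>: "\<xi> \<in> l2" for \<xi>
  proof -
    have T\<xi>: "T \<xi> \<in> l2" using T \<xi> by (simp add: B_local_def bop_l2)
    have "(S \<circ> T) (tensor_left a \<xi>) = S (LA a (T \<xi>))"
      using T a \<xi> by (simp add: B_local_def stdA_def)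
    also have "\<dots> = S (LA a (adj S (S (T \<xi>))))"
      by (simp add: isometry_adj_cancel[OF S(1) T\<xi>])
    also have "\<dots> = tensor_left a' ((S \<circ> T) \<xi>)"
      using fun_cong[OF conj, of "S (T \<xi>)"] by (simp add: stdA_def)
    finally show ?thesis .
  qed
  with a' show "\<exists>a'. bop a' \<and> (\<forall>\<xi>\<in>l2. (S \<circ> T) (tensor_left a \<xi>) = tensor_left a' ((S \<circ> T) \<xi>))"
    by blast
qed

lemma right_covariant_comp_local:
  fixes T :: "('ia \<times> 'ib \<Rightarrow> complex) \<Rightarrow> ('m \<Rightarrow> complex)"
    and S :: "('m \<Rightarrow> complex) \<Rightarrow> ('ka \<times> 'kb \<Rightarrow> complex)"
    and MA :: "(('ka \<Rightarrow> complex) \<Rightarrow> ('ka \<Rightarrow> complex)) \<Rightarrow> (('m \<Rightarrow> complex) \<Rightarrow> ('m \<Rightarrow> complex))"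
    and MB :: "(('ib \<Rightarrow> complex) \<Rightarrow> ('ib \<Rightarrow> complex)) \<Rightarrow> (('m \<Rightarrow> complex) \<Rightarrow> ('m \<Rightarrow> complex))"
  assumes T: "A_local stdA stdB MA MB T" and S: "isometry S" "B_local MA MB stdA stdB S"
  shows "right_covariant (S \<circ> T)"
  unfolding right_covariant_def
proof (intro allI impI)
  fix b :: "('ib \<Rightarrow> complex) \<Rightarrow> ('ib \<Rightarrow> complex)"
  assume b: "bop b"
  \<comment> \<open>\<open>stdB c\<close> is \<open>1 \<otimes> c\<^sup>t\<close>, so \<open>1 \<otimes> b\<close> is \<open>stdB (transp b)\<close>\<close>
  have c: "bop (transp b)" using b by (rule transp_bop)
  obtain c' where c': "bop c'" and conj: "S \<circ> MB (transp b) \<circ> adj S = stdB c'"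
    using S(2) c unfolding B_local_def by blast
  have "(S \<circ> T) (tensor_right b \<xi>) = tensor_right (transp c') ((S \<circ> T) \<xi>)" if \<xi>: "\<xi> \<in> l2" for \<xi>
  proof -
    have T\<xi>: "T \<xi> \<in> l2" using T \<xi> by (simp add: A_local_def bop_l2)
    have "T (stdB (transp b) \<xi>) = MB (transp b) (T \<xi>)"
      using T c \<xi> unfolding A_local_def by blast
    moreover have "stdB (transp b) = tensor_right b"
      using b by (simp add: stdB_def transp_transp)
    ultimately have "(S \<circ> T) (tensor_right b \<xi>) = S (MB (transp b) (T \<xi>))"
      by (metis comp_apply)
    also have "\<dots> = S (MB (transp b) (adj S (S (T \<xi>))))"
      by (simp add: isometry_adj_cancel[OF S(1) T\<xi>])
    also have "\<dots> = tensor_right (transp c') ((S \<circ> T) \<xi>)"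
      using fun_cong[OF conj, of "S (T \<xi>)"] by (simp add: stdB_def)
    finally show ?thesis .
  qed
  with c' show "\<exists>b'. bop b' \<and> (\<forall>\<xi>\<in>l2. (S \<circ> T) (tensor_right b \<xi>) = tensor_right b' ((S \<circ> T) \<xi>))"
    by (blast intro: transp_bop)
qed

text \<open>Taking \<open>a = 1\<close> in the locality conditions: \<open>T T\<^sup>* = LB(b\<^sub>0)\<close> and \<open>S S\<^sup>* = a\<^sub>0 \<otimes> 1\<close>, and
  \<open>S\<close> intertwines \<open>LB(b\<^sub>0)\<close> with \<open>1 \<otimes> b\<^sub>0\<^sup>t\<close>.\<close>

lemma range_projection_comp_local:
  fixes T :: "('ia \<times> 'ib \<Rightarrow> complex) \<Rightarrow> ('l \<Rightarrow> complex)"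
    and S :: "('l \<Rightarrow> complex) \<Rightarrow> ('ka \<times> 'kb \<Rightarrow> complex)"
    and LA :: "(('ia \<Rightarrow> complex) \<Rightarrow> ('ia \<Rightarrow> complex)) \<Rightarrow> (('l \<Rightarrow> complex) \<Rightarrow> ('l \<Rightarrow> complex))"
    and LB :: "(('kb \<Rightarrow> complex) \<Rightarrow> ('kb \<Rightarrow> complex)) \<Rightarrow> (('l \<Rightarrow> complex) \<Rightarrow> ('l \<Rightarrow> complex))"
  assumes LA: "LA idop = idop" and T: "B_local stdA stdB LA LB T" and S: "A_local LA LB stdA stdB S"
  obtains \<alpha> \<beta> where "bop \<alpha>" "bop \<beta>" "\<And>g. (S \<circ> T) (adj (S \<circ> T) g) = tensor_right \<beta> (tensor_left \<alpha> g)"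
proof -
  have bT: "bop T" and bS: "bop S"
    using T S by (simp_all add: A_local_def B_local_def)
  obtain a0 where a0: "bop a0" and SS: "S \<circ> LA idop \<circ> adj S = stdA a0"
    using S idop_bop unfolding A_local_def by blast
  obtain b0 where b0: "bop b0" and TT: "T \<circ> stdB idop \<circ> adj T = LB b0"
    using T idop_bop unfolding B_local_def by blast
  have "(S \<circ> T) (adj (S \<circ> T) g) = tensor_right (transp b0) (tensor_left a0 g)" for g
  proof -
    define h where "h = adj S g"
    have h: "h \<in> l2" unfolding h_def by (rule bop_range_l2[OF adj_bop[OF bS]])
    have "(S \<circ> T) (adj (S \<circ> T) g) = S (T (adj T h))"
      by (simp add: h_def adj_comp[OF bT bS])
    also have "T (adj T h) = LB b0 h"
      using fun_cong[OF TT, of h] bop_range_l2[OF adj_bop[OF bT]]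
      by (simp add: stdB_def transp_idop tensor_right_idop)
    also have "S (LB b0 h) = stdB b0 (S h)"
      using S b0 h by (simp add: A_local_def)
    also have "S h = stdA a0 g"
      using fun_cong[OF SS, of g] h by (simp add: LA h_def)
    finally show ?thesis by (simp only: stdA_def stdB_def)
  qed
  with that a0 b0 transp_bop show ?thesis by blast
qed

theorem mainTheorem1:
  fixes V :: "('ia \<times> 'ib \<Rightarrow> complex) \<Rightarrow> ('ka \<times> 'kb \<Rightarrow> complex)"
    and LA :: "(('ia \<Rightarrow> complex) \<Rightarrow> ('ia \<Rightarrow> complex)) \<Rightarrow> (('l \<Rightarrow> complex) \<Rightarrow> ('l \<Rightarrow> complex))"
    and LB :: "(('kb \<Rightarrow> complex) \<Rightarrow> ('kb \<Rightarrow> complex)) \<Rightarrow> (('l \<Rightarrow> complex) \<Rightarrow> ('l \<Rightarrow> complex))"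
    and MA :: "(('ka \<Rightarrow> complex) \<Rightarrow> ('ka \<Rightarrow> complex)) \<Rightarrow> (('m \<Rightarrow> complex) \<Rightarrow> ('m \<Rightarrow> complex))"
    and MB :: "(('ib \<Rightarrow> complex) \<Rightarrow> ('ib \<Rightarrow> complex)) \<Rightarrow> (('m \<Rightarrow> complex) \<Rightarrow> ('m \<Rightarrow> complex))"
    and T11 :: "('ia \<times> 'ib \<Rightarrow> complex) \<Rightarrow> ('m \<Rightarrow> complex)"
    and T22 :: "('l \<Rightarrow> complex) \<Rightarrow> ('ka \<times> 'kb \<Rightarrow> complex)"
    and T12 :: "('ia \<times> 'ib \<Rightarrow> complex) \<Rightarrow> ('l \<Rightarrow> complex)"
    and T21 :: "('m \<Rightarrow> complex) \<Rightarrow> ('ka \<times> 'kb \<Rightarrow> complex)"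
  assumes L_sys: "bip_sys LA LB"
    and Lt_sys: "bip_sys MA MB"
    and T11: "isometry T11" "A_local stdA stdB MA MB T11"
    and T22: "isometry T22" "A_local LA LB stdA stdB T22"
    and T12: "isometry T12" "B_local stdA stdB LA LB T12"
    and T21: "isometry T21" "B_local MA MB stdA stdB T21"
    and V1: "V = T22 \<circ> T12"
    and V2: "V = T21 \<circ> T11"
  shows "\<exists>(VA :: ('ia \<Rightarrow> complex) \<Rightarrow> ('ka \<Rightarrow> complex)) (VB :: ('ib \<Rightarrow> complex) \<Rightarrow> ('kb \<Rightarrow> complex)).
           isometry VA \<and> isometry VB \<and> (\<forall>\<xi>\<in>l2. V \<xi> = optensor VA VB \<xi>)"
proof -
  \<comment> \<open>of the system axioms only \<open>LA 1 = 1\<close> is needed\<close>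
  have "LA idop = idop" using L_sys by (simp add: bip_sys_def star_rep_def)
  from range_projection_comp_local[OF this T12(2) T22(2)]
  obtain \<alpha> \<beta> where \<alpha>: "bop \<alpha>" and \<beta>: "bop \<beta>"
    and VV: "\<And>g. V (adj V g) = tensor_right \<beta> (tensor_left \<alpha> g)"
    unfolding V1 by blast
  have "isometry V" unfolding V1 using T12(1) T22(1) by (rule isometry_comp)
  moreover have "left_covariant V" unfolding V1 using T12(2) T22 by (rule left_covariant_comp_local)
  moreover have "right_covariant V" unfolding V2 using T11(2) T21 by (rule right_covariant_comp_local)
  ultimately obtain VA VB where "isometry VA" "isometry VB" "V = optensor VA VB"
    using covariant_isometry_split[OF _ _ _ \<alpha> \<beta> VV] by blast
  then show ?thesis by blast
qed

end
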